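(* Let $k$, $\varphi$, $b$ and $\mathbf V(s)$ be as in the context and let $(T,D_t)$ be the trivial differential module of rank $1$. Then the columns of $\mathbf V(s)$ form a basis of the space of horizontal elements at $b$ of the direct image $(T_\varphi,D_s)$ (in coordinates with respect to the basis $e,te,\dots,t^{d-1}e$).
   Context: $k$ is an algebraically closed field complete for a non-archimedean absolute value extending the $p$-adic one. ${\mathscr D}_t^\pm$ is the unit disc (open or closed) with analytic functions $\mathcal O_t^\pm$; $\mathcal O_s(b,r^-)$ is the ring of power series in $s-b$ converging on $|s-b|<r$. $\varphi:{\mathscr D}_t^\pm\to{\mathscr D}_s^\pm$ is a finite étale morphism of degree $d$ of unit discs given by $s=f(t)$; $P(s,X)$ is the unique monic degree-$d$ polynomial over $\mathcal O_s^\pm$ with $P(f(t),t)=0$. Fix $b\in{\mathscr D}_s^\pm(k)$, $\varphi^{-1}(b)=\{a_1,\dots,a_d\}$; $u_{a_i}(s)\in k[[s-b]]$ is the root of $P(s,X)$ with constant term $a_i$; $\mathbf V(s)$ is the inverse of the $d\times d$ matrix $(u_{a_i}(s)^{j-1})_{i,j}$. The trivial module is $T=\mathcal O_t^\pm e$ with $D_t(ge)=\frac{dg}{dt}e$; its direct image $(T_\varphi,D_s)$ is $T$ viewed as $\mathcal O_s^\pm$-module via $s=f(t)$ with $D_s=\frac1{f'(t)}D_t$, free with basis $e,te,\dots,t^{d-1}e$. A horizontal element at $b$ is an element of $\ker D_s$ on $T_\varphi\otimes\mathcal O_s(b,r^-)$ for some $r>0$, identified with its coordinate vector in $k[[s-b]]^d$.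 *)

theory Defs
  imports "HOL-Computational_Algebra.Formal_Power_Series"
          "HOL-Computational_Algebra.Polynomial"
          "HOL-Computational_Algebra.Primes"
begin

definition is_nonarch_abs :: "('k::field \<Rightarrow> real) \<Rightarrow> bool" where
  "is_nonarch_abs av \<longleftrightarrow>
     (\<forall>x. 0 \<le> av x) \<and> (\<forall>x. av x = 0 \<longleftrightarrow> x = 0) \<and>
     (\<forall>x y. av (x * y) = av x * av y) \<and>
     (\<forall>x y. av (x + y) \<le> max (av x) (av y))"

definition kconv :: "('k::field \<Rightarrow> real) \<Rightarrow> (nat \<Rightarrow> 'k) \<Rightarrow> 'k \<Rightarrow> bool" where
  "kconv av X L \<longleftrightarrow> (\<forall>e>0. \<exists>N. \<forall>n\<ge>N. av (X n - L) < e)"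

definition kcauchy :: "('k::field \<Rightarrow> real) \<Rightarrow> (nat \<Rightarrow> 'k) \<Rightarrow> bool" where
  "kcauchy av X \<longleftrightarrow> (\<forall>e>0. \<exists>N. \<forall>m\<ge>N. \<forall>n\<ge>N. av (X m - X n) < e)"

definition nonarch_field :: "('k::field \<Rightarrow> real) \<Rightarrow> bool" where
  "nonarch_field av \<longleftrightarrow>
     is_nonarch_abs av \<and>
     (\<exists>p::nat. prime p \<and> av (of_nat p) = 1 / real p) \<and>
     (\<forall>X. kcauchy av X \<longrightarrow> (\<exists>L. kconv av X L)) \<and>
     (\<forall>q::'k poly. 0 < degree q \<longrightarrow> (\<exists>x. poly q x = 0))"

definition ksum :: "('k::field \<Rightarrow> real) \<Rightarrow> (nat \<Rightarrow> 'k) \<Rightarrow> 'k" where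
  "ksum av x = (THE S. kconv av (\<lambda>n. \<Sum>i<n. x i) S)"

definition ev :: "('k::field \<Rightarrow> real) \<Rightarrow> 'k fps \<Rightarrow> 'k \<Rightarrow> 'k" where
  "ev av a z = ksum av (\<lambda>n. fps_nth a n * z ^ n)"

definition conv_rad :: "('k::field \<Rightarrow> real) \<Rightarrow> 'k fps \<Rightarrow> real \<Rightarrow> bool" where
  "conv_rad av a r \<longleftrightarrow> (\<forall>\<rho>. 0 \<le> \<rho> \<and> \<rho> < r \<longrightarrow> (\<lambda>n. av (fps_nth a n) * \<rho> ^ n) \<longlonglongrightarrow> 0)"

text \<open>cl = True: closed unit disc (Tate algebra); cl = False: open unit disc.\<close>
definition udisc :: "('k::field \<Rightarrow> real) \<Rightarrow> bool \<Rightarrow> 'k set" where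
  "udisc av cl = {x. if cl then av x \<le> 1 else av x < 1}"

definition Odisc :: "('k::field \<Rightarrow> real) \<Rightarrow> bool \<Rightarrow> 'k fps set" where
  "Odisc av cl = {a. if cl then (\<lambda>n. av (fps_nth a n)) \<longlonglongrightarrow> 0 else conv_rad av a 1}"

text \<open>Taylor expansion at b of a power series in s: an element of k[[s-b]],
  represented as a formal power series in the variable (s - b).\<close>
definition expand_at :: "('k::field \<Rightarrow> real) \<Rightarrow> 'k fps \<Rightarrow> 'k \<Rightarrow> 'k fps" where
  "expand_at av h b = Abs_fps (\<lambda>n. ksum av (\<lambda>m. of_nat (m choose n) * fps_nth h m * b ^ (m - n)))"

text \<open>s = f(t) defines a finite etale morphism of degree d of unit discs:
  f is analytic, maps the disc to the disc, O_t is free over O_s (via s = f(t))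
  with basis 1, t, ..., t^(d-1), and f' is a unit of O_t.\<close>
definition finite_etale :: "('k::field \<Rightarrow> real) \<Rightarrow> bool \<Rightarrow> 'k fps \<Rightarrow> nat \<Rightarrow> bool" where
  "finite_etale av cl f d \<longleftrightarrow>
     f \<in> Odisc av cl \<and>
     (\<forall>x\<in>udisc av cl. ev av f x \<in> udisc av cl) \<and>
     (\<forall>h\<in>Odisc av cl. \<exists>!c::nat \<Rightarrow> 'k fps.
          (\<forall>j<d. c j \<in> Odisc av cl) \<and> (\<forall>j\<ge>d. c j = 0) \<and>
          (\<forall>x\<in>udisc av cl. ev av h x = (\<Sum>j<d. ev av (c j) (ev av f x) * x ^ j))) \<and>
     (\<exists>g\<in>Odisc av cl. \<forall>x\<in>udisc av cl. ev av (fps_deriv f) x * ev av g x = 1)"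

text \<open>P(s,X) = X^d + sum_{m<d} P_m(s) X^m is the monic polynomial with P(f(t),t) = 0.\<close>
definition is_min_poly :: "('k::field \<Rightarrow> real) \<Rightarrow> bool \<Rightarrow> 'k fps \<Rightarrow> nat \<Rightarrow> (nat \<Rightarrow> 'k fps) \<Rightarrow> bool" where
  "is_min_poly av cl f d P \<longleftrightarrow>
     (\<forall>m<d. P m \<in> Odisc av cl) \<and>
     (\<forall>x\<in>udisc av cl. (\<Sum>m<d. ev av (P m) (ev av f x) * x ^ m) + x ^ d = 0)"

text \<open>Matrix of the connection D_s = (1/f') D_t of the direct image T_phi in the basis
  e, te, ..., t^(d-1) e:  D_s(t^j e) = sum_m C j m (s) t^m e.\<close>
definition is_conn_matrix :: "('k::field \<Rightarrow> real) \<Rightarrow> bool \<Rightarrow> 'k fps \<Rightarrow> nat \<Rightarrow> (nat \<Rightarrow> nat \<Rightarrow> 'k fps) \<Rightarrow> bool" where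
  "is_conn_matrix av cl f d C \<longleftrightarrow>
     (\<forall>j<d. \<forall>m<d. C j m \<in> Odisc av cl) \<and>
     (\<forall>j<d. \<forall>x\<in>udisc av cl.
        ev av (fps_deriv f) x * (\<Sum>m<d. ev av (C j m) (ev av f x) * x ^ m) = of_nat j * x ^ (j - 1))"

text \<open>Horizontal element at b: y = sum_j y_j(s) t^j e with y_j in O_s(b, r^-) for some
  r > 0 (coordinates as series in s - b) and D_s y = 0.\<close>
definition horizontal :: "('k::field \<Rightarrow> real) \<Rightarrow> nat \<Rightarrow> 'k \<Rightarrow> (nat \<Rightarrow> nat \<Rightarrow> 'k fps) \<Rightarrow> (nat \<Rightarrow> 'k fps) \<Rightarrow> bool" where
  "horizontal av d b C y \<longleftrightarrow>
     (\<exists>r>0. \<forall>j<d. conv_rad av (y j) r) \<and>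
     (\<forall>m<d. fps_deriv (y m) + (\<Sum>j<d. y j * expand_at av (C j m) b) = 0)"

end

theory Submission
  imports Defs
begin

text \<open>Near each point a i of the fibre over b, the local inverse of f is the power series
  a i + fps_inv (f(a i + t) - b), obtained by formal compositional inversion; it converges near b
  because in a non-archimedean field the coefficient recursions can be bounded in Gauss norms.
  By the identity theorem, P(f(t), t) = 0 and f'(t) D_s(t^j) = j t^(j-1) become identities of
  formal power series along each branch. Hence the branches are the d distinct roots of P in
  k[[s - b]], so they are the u i, and d/ds (u i)^j = sum_m C j m (u i)^m. Consequently the pairings
  z i = sum_j (u i)^j y j of a section y satisfy z i' = sum_m (u i)^m (D_s y) m; as the Vandermonde
  matrix ((u i)^j) is invertible, y is horizontal iff all z i are constants, i.e. iff y = V z with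
  z in k^d. The entries of V converge near b by Lagrange's interpolation formula, whose
  denominators have the nonzero constant terms prod (a j - a m).\<close>

unbundle fps_syntax

lemma tendsto_0_squeeze:
  fixes f g :: "nat \<Rightarrow> real"
  shows "(\<And>n. g n \<le> f n) \<Longrightarrow> f \<longlonglongrightarrow> 0 \<Longrightarrow> (\<And>n. 0 \<le> g n) \<Longrightarrow> g \<longlonglongrightarrow> 0"
  by (rule tendsto_sandwich[of "\<lambda>_. 0" g sequentially f]) auto

lemma tendsto_0_if_eventually_le:
  fixes g :: "nat \<Rightarrow> real"
  assumes "\<And>e. e > 0 \<Longrightarrow> eventually (\<lambda>n. g n \<le> e) sequentially" "\<And>n. 0 \<le> g n"
  shows "g \<longlonglongrightarrow> 0"
proof (rule order_tendstoI)
  fix a :: real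
  assume "a < 0"
  then show "eventually (\<lambda>n. a < g n) sequentially"
    using assms(2) by (simp add: order_less_le_trans)
next
  fix a :: real
  assume "0 < a"
  then have "eventually (\<lambda>n. g n \<le> a/2) sequentially"
    by (intro assms(1)) simp
  then show "eventually (\<lambda>n. g n < a) sequentially"
    using \<open>0 < a\<close> by (auto elim: eventually_mono)
qed

lemma tendsto_0_mult_eventually_le:
  fixes f :: "nat \<Rightarrow> real"
  assumes "f \<longlonglongrightarrow> 0" "e > 0"
  shows "\<exists>M. \<forall>k\<ge>M. f k * B \<le> e"
proof -
  have "(\<lambda>k. f k * B) \<longlonglongrightarrow> 0"
    using tendsto_mult_left_zero[OF assms(1)] by simp
  then obtain M where "\<forall>k\<ge>M. \<bar>f k * B\<bar> < e"
    using assms(2) unfolding LIMSEQ_iff by fastforce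
  then show ?thesis
    by (meson abs_ge_self less_imp_le order_trans)
qed

lemma sum_lessThan_shift_if:
  fixes g :: "nat \<Rightarrow> 'a::comm_monoid_add"
  shows "(\<Sum>n<N. if k \<le> n then g (n - k) else 0) = (\<Sum>j<N - k. g j)"
proof (induct N)
  case (Suc N)
  then show ?case
    by (cases "k \<le> N") (auto simp: Suc_diff_le)
qed simp

section \<open>Formal power series\<close>

lemma fps_inverse_nth_recursion:
  fixes D :: "'a::field fps"
  assumes "D$0 \<noteq> 0" "n > 0"
  shows "D$0 * inverse D $ n = - (\<Sum>i\<in>{1..n}. D$i * inverse D $ (n-i))"
proof -
  have "(D * inverse D)$n = D$0 * inverse D $ n + (\<Sum>i\<in>{1..n}. D$i * inverse D $ (n-i))"
    using assms(2) by (simp add: fps_mult_nth sum.atLeast_Suc_atMost)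
  moreover have "(D * inverse D)$n = 0"
    using inverse_mult_eq_1'[OF assms(1)] assms(2) by simp
  ultimately show ?thesis
    by (simp add: eq_neg_iff_add_eq_0)
qed

lemma fps_prod_nth_0: "(\<Prod>i\<in>S. f i) $ 0 = (\<Prod>i\<in>S. f i $ 0 :: 'a::comm_ring_1)"
  by (induct S rule: infinite_finite_induct) auto

lemma fps_deriv_eq_0_imp_const:
  assumes char_0: "\<And>n. n > 0 \<Longrightarrow> (of_nat n :: 'a::field) \<noteq> 0" and "fps_deriv f = (0 :: 'a fps)"
  shows "f = fps_const (f$0)"
proof (rule fps_ext)
  fix n
  show "f$n = fps_const (f$0) $ n"
  proof (cases n)
    case (Suc m)
    then have "of_nat (Suc m) * f $ Suc m = 0"
      using arg_cong[OF assms(2), of "\<lambda>g. g$m"] by simp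
    then show ?thesis
      using char_0[of "Suc m"] Suc by simp
  qed simp
qed

lemma compose_fps_inv_cancel:
  fixes A :: "'a::field fps"
  assumes "A$0 = 0" "A$1 \<noteq> 0"
  shows "(Q oo A) oo fps_inv A = Q"
proof -
  have "fps_inv A $ 0 = 0"
    by (simp add: fps_inv_def)
  then show ?thesis
    using fps_compose_assoc[of "fps_inv A" A Q] fps_inv_right[OF assms] assms(1) by simp
qed

text \<open>Substituting the compositional inverse of A turns identities along A into identities along
  the inverse branch c + fps_inv A.\<close>

lemma compose_fps_inv_poly_eq_0:
  fixes A :: "'a::field fps"
  assumes A0: "A$0 = 0" and A1: "A$1 \<noteq> 0"
    and eq: "(\<Sum>m<d. (Q m oo A) * (fps_const c + fps_X)^m) + (fps_const c + fps_X)^d = 0"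
  shows "(\<Sum>m<d. Q m * (fps_const c + fps_inv A)^m) + (fps_const c + fps_inv A)^d = 0"
proof -
  have G0: "fps_inv A $ 0 = 0"
    by (simp add: fps_inv_def)
  have "((\<Sum>m<d. (Q m oo A) * (fps_const c + fps_X)^m) + (fps_const c + fps_X)^d) oo fps_inv A = 0"
    using eq by simp
  then show ?thesis
    by (simp add: fps_compose_add_distrib fps_compose_sum_distrib fps_compose_mult_distrib[OF G0]
        fps_compose_power[OF G0, symmetric] compose_fps_inv_cancel[OF A0 A1] G0)
qed

lemma compose_fps_inv_deriv_eq:
  fixes A :: "'a::field fps"
  assumes A0: "A$0 = 0" and A1: "A$1 \<noteq> 0"
    and eq: "fps_deriv A * (\<Sum>m<d. (Q m oo A) * (fps_const c + fps_X)^m)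
             = of_nat j * (fps_const c + fps_X)^(j - 1)"
  shows "(\<Sum>m<d. Q m * (fps_const c + fps_inv A)^m)
         = of_nat j * (fps_const c + fps_inv A)^(j - 1) * fps_deriv (fps_const c + fps_inv A)"
proof -
  define u where "u = fps_const c + fps_inv A"
  have G0: "fps_inv A $ 0 = 0"
    by (simp add: fps_inv_def)
  have chain: "(fps_deriv A oo fps_inv A) * fps_deriv (fps_inv A) = 1"
    using fps_compose_deriv[OF G0, of A] fps_inv_right[OF A0 A1] by simp
  have "(fps_deriv A * (\<Sum>m<d. (Q m oo A) * (fps_const c + fps_X)^m)) oo fps_inv A
        = (of_nat j * (fps_const c + fps_X)^(j - 1)) oo fps_inv A"
    using eq by simp
  then have transferred: "(fps_deriv A oo fps_inv A) * (\<Sum>m<d. Q m * u^m) = of_nat j * u^(j - 1)"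
    by (simp add: fps_compose_add_distrib fps_compose_sum_distrib fps_compose_mult_distrib[OF G0]
        fps_compose_power[OF G0, symmetric] compose_fps_inv_cancel[OF A0 A1] u_def
        fps_of_nat[symmetric] G0)
  have "(\<Sum>m<d. Q m * u^m) = ((fps_deriv A oo fps_inv A) * fps_deriv (fps_inv A)) * (\<Sum>m<d. Q m * u^m)"
    by (simp add: chain)
  also have "\<dots> = fps_deriv (fps_inv A) * ((fps_deriv A oo fps_inv A) * (\<Sum>m<d. Q m * u^m))"
    by (simp add: algebra_simps)
  also have "\<dots> = of_nat j * u^(j - 1) * fps_deriv u"
    by (simp only: transferred) (simp add: u_def)
  finally show ?thesis
    by (simp add: u_def)
qed

section \<open>Inverse Vandermonde matrices and horizontal sections\<close>

lemma poly_root_among_distinct_roots: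
  fixes Q :: "'a::idom poly"
  assumes Q: "Q \<noteq> 0" "degree Q \<le> d"
    and r: "inj_on r {..<d}" "\<And>i. i < d \<Longrightarrow> poly Q (r i) = 0"
    and v: "poly Q v = 0"
  shows "\<exists>i<d. v = r i"
proof (rule ccontr)
  assume "\<not> (\<exists>i<d. v = r i)"
  then have "card (insert v (r ` {..<d})) = Suc d"
    using r(1) by (subst card_insert_disjoint) (auto simp: card_image)
  moreover have "card (insert v (r ` {..<d})) \<le> card {x. poly Q x = 0}"
    using r(2) v by (intro card_mono[OF poly_roots_finite[OF Q(1)]]) auto
  moreover have "card {x. poly Q x = 0} \<le> degree Q"
    by (rule card_poly_roots_bound[OF Q(1)])
  ultimately show False
    using Q(2) by simp
qed

definition monic_poly :: "nat \<Rightarrow> (nat \<Rightarrow> 'a::comm_ring_1) \<Rightarrow> 'a poly" where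
  "monic_poly d P = monom 1 d + (\<Sum>m<d. monom (P m) m)"

lemma poly_monic_poly: "poly (monic_poly d P) x = (\<Sum>m<d. P m * x^m) + x^d"
  by (simp add: monic_poly_def poly_sum poly_monom)

lemma monic_poly_neq_0: "monic_poly d (P :: nat \<Rightarrow> 'a::idom) \<noteq> 0"
proof -
  have "coeff (monic_poly d P) d = 1"
    by (simp add: monic_poly_def coeff_sum)
  then show ?thesis
    by auto
qed

lemma degree_monic_poly: "degree (monic_poly d P) \<le> d"
  unfolding monic_poly_def
  by (intro degree_add_le degree_monom_le degree_sum_le) (auto intro: order_trans[OF degree_monom_le])

text \<open>Lagrange interpolation: column j of the inverse Vandermonde matrix holds the coefficients
  of the polynomial prod (X - u m), m \<noteq> j, divided by its value at u j.\<close>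

lemma Vandermonde_inverse_Lagrange:
  fixes u :: "nat \<Rightarrow> 'a::idom" and V :: "nat \<Rightarrow> nat \<Rightarrow> 'a"
  assumes inj: "inj_on u {..<d}"
    and inv_V: "\<forall>i<d. \<forall>j<d. (\<Sum>l<d. u i ^ l * V l j) = (if i = j then 1 else 0)"
    and j: "j < d" and l: "l < d"
  shows "(\<Prod>m\<in>{..<d}-{j}. (u j - u m)) * V l j = coeff (\<Prod>m\<in>{..<d}-{j}. [:- u m, 1:]) l"
proof -
  define D where "D = (\<Prod>m\<in>{..<d}-{j}. (u j - u m))"
  define N where "N = (\<Prod>m\<in>{..<d}-{j}. [:- u m, 1:])"
  define Q where "Q = (\<Sum>l<d. monom (V l j) l)"
  define R where "R = smult D Q - N"
  have "degree Q \<le> d - 1"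
    unfolding Q_def by (intro degree_sum_le) (auto intro: order_trans[OF degree_monom_le])
  moreover have "degree N \<le> d - 1"
    using degree_prod_sum_le[of "{..<d}-{j}" "\<lambda>m. [:- u m, 1:]"] j by (simp add: N_def o_def)
  ultimately have "degree R \<le> d - 1"
    unfolding R_def using degree_diff_le degree_smult_le order_trans by blast
  have roots: "poly R (u i) = 0" if "i < d" for i
  proof -
    have "poly Q (u i) = (\<Sum>l<d. u i ^ l * V l j)"
      by (simp add: Q_def poly_sum poly_monom mult.commute)
    moreover have "poly N (u i) = (\<Prod>m\<in>{..<d}-{j}. (u i - u m))"
      by (simp add: N_def poly_prod)
    moreover have "(\<Prod>m\<in>{..<d}-{j}. (u i - u m)) = 0" if "i \<noteq> j"
      using \<open>i < d\<close> that by (intro prod_zero) auto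
    ultimately show ?thesis
      using inv_V that j by (cases "i = j") (simp_all add: R_def D_def)
  qed
  have "coeff Q l = V l j"
    using l by (simp add: Q_def coeff_sum)
  moreover have "R = 0"
  proof (rule ccontr)
    assume "R \<noteq> 0"
    then have "card (u ` {..<d}) \<le> card {x. poly R x = 0}"
      using roots by (intro card_mono[OF poly_roots_finite]) auto
    also have "\<dots> \<le> degree R"
      by (rule card_poly_roots_bound[OF \<open>R \<noteq> 0\<close>])
    finally show False
      using card_image[OF inj] \<open>degree R \<le> d - 1\<close> j by simp
  qed
  ultimately have "D * V l j = coeff N l"
    by (metis R_def coeff_smult eq_iff_diff_eq_0)
  then show ?thesis
    by (simp add: D_def N_def)
qed

lemma Vandermonde_inverse_solve:
  fixes u :: "nat \<Rightarrow> 'a::comm_ring_1"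
  assumes V_inv: "\<forall>i<d. \<forall>j<d. (\<Sum>l<d. V i l * u l ^ j) = (if i = j then 1 else 0)" and "k < d"
  shows "(\<Sum>l<d. V k l * (\<Sum>m<d. u l ^ m * E m)) = E k"
proof -
  have "(\<Sum>l<d. V k l * (\<Sum>m<d. u l ^ m * E m)) = (\<Sum>l<d. \<Sum>m<d. V k l * u l ^ m * E m)"
    by (simp add: sum_distrib_left mult_ac)
  also have "\<dots> = (\<Sum>m<d. (\<Sum>l<d. V k l * u l ^ m) * E m)"
    by (subst sum.swap) (simp add: sum_distrib_right)
  also have "\<dots> = (\<Sum>m<d. if k = m then E m else 0)"
    using V_inv \<open>k < d\<close> by (intro sum.cong refl) simp
  finally show ?thesis
    using \<open>k < d\<close> by simp
qed

lemma Vandermonde_inverse_columns_independent: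
  fixes u :: "nat \<Rightarrow> 'a::comm_ring_1"
  assumes inv_V: "\<forall>i<d. \<forall>j<d. (\<Sum>l<d. u i ^ l * V l j) = (if i = j then 1 else 0)"
    and zero: "\<forall>i<d. (\<Sum>j<d. c j * V i j) = 0" and "l < d"
  shows "c l = 0"
proof -
  have "0 = (\<Sum>i<d. u l ^ i * (\<Sum>j<d. c j * V i j))"
    using zero by simp
  also have "\<dots> = (\<Sum>i<d. \<Sum>j<d. c j * (u l ^ i * V i j))"
    by (simp add: sum_distrib_left mult_ac)
  also have "\<dots> = (\<Sum>j<d. c j * (\<Sum>i<d. u l ^ i * V i j))"
    by (subst sum.swap) (simp add: sum_distrib_left)
  also have "\<dots> = (\<Sum>j<d. if l = j then c j else 0)"
    using inv_V \<open>l < d\<close> by (intro sum.cong refl) simp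
  finally show ?thesis
    using \<open>l < d\<close> by simp
qed

lemma fps_deriv_pairing:
  fixes u :: "'a::comm_ring_1 fps"
  assumes conn: "\<And>i. i < d \<Longrightarrow> (\<Sum>m<d. Ct i m * u^m) = of_nat i * u^(i - 1) * fps_deriv u"
  shows "fps_deriv (\<Sum>i<d. u^i * y i) = (\<Sum>m<d. u^m * (fps_deriv (y m) + (\<Sum>i<d. y i * Ct i m)))"
proof -
  have "fps_deriv (\<Sum>i<d. u^i * y i) = (\<Sum>i<d. fps_deriv (u^i) * y i + u^i * fps_deriv (y i))"
    by (simp add: fps_deriv_sum algebra_simps)
  also have "\<dots> = (\<Sum>i<d. (\<Sum>m<d. Ct i m * u^m) * y i + u^i * fps_deriv (y i))"
    using conn by (intro sum.cong refl) (simp add: fps_deriv_power' mult_ac)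
  also have "\<dots> = (\<Sum>i<d. \<Sum>m<d. u^m * (y i * Ct i m)) + (\<Sum>m<d. u^m * fps_deriv (y m))"
    by (simp add: sum.distrib sum_distrib_left sum_distrib_right mult_ac)
  also have "\<dots> = (\<Sum>m<d. \<Sum>i<d. u^m * (y i * Ct i m)) + (\<Sum>m<d. u^m * fps_deriv (y m))"
    by (subst sum.swap) (rule refl)
  finally show ?thesis
    by (simp add: sum.distrib distrib_left sum_distrib_left)
qed

lemma horizontal_iff_pairings_const:
  fixes u :: "nat \<Rightarrow> 'a::comm_ring_1 fps"
  assumes conn: "\<And>l i. l < d \<Longrightarrow> i < d \<Longrightarrow> (\<Sum>m<d. Ct i m * u l ^ m) = of_nat i * u l ^ (i - 1) * fps_deriv (u l)"
    and V_inv: "\<forall>i<d. \<forall>j<d. (\<Sum>l<d. V i l * u l ^ j) = (if i = j then 1 else 0)"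
  shows "(\<forall>m<d. fps_deriv (y m) + (\<Sum>i<d. y i * Ct i m) = 0)
         \<longleftrightarrow> (\<forall>l<d. fps_deriv (\<Sum>i<d. u l ^ i * y i) = 0)"
proof
  assume "\<forall>m<d. fps_deriv (y m) + (\<Sum>i<d. y i * Ct i m) = 0"
  then show "\<forall>l<d. fps_deriv (\<Sum>i<d. u l ^ i * y i) = 0"
    using fps_deriv_pairing[OF conn] by simp
next
  assume pairings: "\<forall>l<d. fps_deriv (\<Sum>i<d. u l ^ i * y i) = 0"
  show "\<forall>m<d. fps_deriv (y m) + (\<Sum>i<d. y i * Ct i m) = 0"
  proof (intro allI impI)
    fix m
    assume "m < d"
    define E where "E m = fps_deriv (y m) + (\<Sum>i<d. y i * Ct i m)" for m
    have "(\<Sum>m<d. u l ^ m * E m) = 0" if "l < d" for l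
      using fps_deriv_pairing[OF conn, of l y] pairings that by (simp add: E_def)
    then have "E m = 0"
      using Vandermonde_inverse_solve[OF V_inv \<open>m < d\<close>, of E, symmetric] by simp
    then show "fps_deriv (y m) + (\<Sum>i<d. y i * Ct i m) = 0"
      by (simp add: E_def)
  qed
qed

text \<open>The theorem at the level of formal power series, where no convergence is involved.\<close>

lemma horizontal_basis_formal:
  fixes u :: "nat \<Rightarrow> 'a::field fps" and V Ct :: "nat \<Rightarrow> nat \<Rightarrow> 'a fps"
  assumes char_0: "\<And>n. n > 0 \<Longrightarrow> (of_nat n :: 'a) \<noteq> 0"
    and conn: "\<And>l i. l < d \<Longrightarrow> i < d \<Longrightarrow> (\<Sum>m<d. Ct i m * u l ^ m) = of_nat i * u l ^ (i - 1) * fps_deriv (u l)"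
    and V_inv: "\<forall>i<d. \<forall>j<d. (\<Sum>l<d. V i l * u l ^ j) = (if i = j then 1 else 0)"
    and inv_V: "\<forall>i<d. \<forall>j<d. (\<Sum>l<d. u i ^ l * V l j) = (if i = j then 1 else 0)"
  shows "j < d \<Longrightarrow> \<forall>m<d. fps_deriv (V m j) + (\<Sum>i<d. V i j * Ct i m) = 0"
    and "\<forall>m<d. fps_deriv (y m) + (\<Sum>i<d. y i * Ct i m) = 0 \<Longrightarrow>
           \<exists>c. \<forall>i<d. y i = (\<Sum>j<d. fps_const (c j) * V i j)"
proof -
  assume "j < d"
  then have "\<forall>l<d. fps_deriv (\<Sum>i<d. u l ^ i * V i j) = 0"
    using inv_V by simp
  then show "\<forall>m<d. fps_deriv (V m j) + (\<Sum>i<d. V i j * Ct i m) = 0"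
    using horizontal_iff_pairings_const[OF conn V_inv, of "\<lambda>i. V i j"] by simp
next
  assume "\<forall>m<d. fps_deriv (y m) + (\<Sum>i<d. y i * Ct i m) = 0"
  then have pairings: "\<forall>l<d. fps_deriv (\<Sum>i<d. u l ^ i * y i) = 0"
    using horizontal_iff_pairings_const[OF conn V_inv, of y] by simp
  define z where "z l = (\<Sum>i<d. u l ^ i * y i) $ 0" for l
  have const: "(\<Sum>i<d. u l ^ i * y i) = fps_const (z l)" if "l < d" for l
    unfolding z_def using pairings that by (intro fps_deriv_eq_0_imp_const[OF char_0]) auto
  have "y i = (\<Sum>l<d. fps_const (z l) * V i l)" if "i < d" for i
  proof -
    have "y i = (\<Sum>l<d. V i l * (\<Sum>m<d. u l ^ m * y m))"
      by (rule Vandermonde_inverse_solve[OF V_inv that, symmetric])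
    also have "\<dots> = (\<Sum>l<d. fps_const (z l) * V i l)"
      using const by (intro sum.cong refl) (simp add: mult.commute)
    finally show ?thesis .
  qed
  then show "\<exists>c. \<forall>i<d. y i = (\<Sum>j<d. fps_const (c j) * V i j)"
    by blast
qed

section \<open>Complete non-archimedean fields\<close>

locale nonarch_complete =
  fixes av :: "'k::field \<Rightarrow> real"
  assumes nonarch_abs: "is_nonarch_abs av"
    and complete: "\<forall>X. kcauchy av X \<longrightarrow> (\<exists>L. kconv av X L)"
begin

lemma av_nonneg [simp]: "0 \<le> av x"
  using nonarch_abs by (simp add: is_nonarch_abs_def)

lemma av_eq_0_iff [simp]: "av x = 0 \<longleftrightarrow> x = 0"
  using nonarch_abs by (simp add: is_nonarch_abs_def)

lemma av_0 [simp]: "av 0 = 0"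
  by simp

lemma av_mult: "av (x * y) = av x * av y"
  using nonarch_abs by (simp add: is_nonarch_abs_def)

lemma av_add_le_max: "av (x + y) \<le> max (av x) (av y)"
  using nonarch_abs by (simp add: is_nonarch_abs_def)

lemma av_pos: "x \<noteq> 0 \<Longrightarrow> 0 < av x"
  using av_nonneg[of x] av_eq_0_iff[of x] by linarith

lemma av_1 [simp]: "av 1 = 1"
  using av_mult[of 1 1] by (metis av_eq_0_iff mult_cancel_left1 zero_neq_one)

lemma av_minus [simp]: "av (- x) = av x"
proof -
  have "av (-1) * av (-1) = 1"
    using av_mult[of "-1" "-1"] by simp
  then have "av (-1) = 1"
    by (metis abs_of_nonneg abs_square_eq_1 av_nonneg power2_eq_square)
  then show ?thesis
    using av_mult[of "-1" x] by simp
qed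

lemma av_minus_commute: "av (x - y) = av (y - x)"
  by (metis av_minus minus_diff_eq)

lemma av_diff_le_max: "av (x - y) \<le> max (av x) (av y)"
  using av_add_le_max[of x "-y"] by simp

lemma av_power: "av (x ^ n) = av x ^ n"
  by (induct n) (auto simp: av_mult)

lemma av_divide: "av (x / y) = av x / av y"
proof (cases "y = 0")
  case False
  then have "av y * av (inverse y) = 1"
    by (metis av_1 av_mult right_inverse)
  then show ?thesis
    by (simp add: divide_inverse av_mult inverse_unique[symmetric])
qed simp

lemma av_of_nat_le_1: "av (of_nat n) \<le> 1"
proof (induct n)
  case (Suc n)
  then show ?case
    using av_add_le_max[of 1 "of_nat n"] by (simp add: add.commute)
qed simp

lemma av_of_int_le_1: "av (of_int n) \<le> 1"
  by (cases n rule: int_cases) (use av_of_nat_le_1 in \<open>simp_all del: of_nat_Suc\<close>)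

lemma av_sum_le: "0 \<le> B \<Longrightarrow> (\<And>i. i \<in> A \<Longrightarrow> av (g i) \<le> B) \<Longrightarrow> av (sum g A) \<le> B"
proof (induct A rule: infinite_finite_induct)
  case (insert x F)
  then show ?case
    by (simp, intro order_trans[OF av_add_le_max max.boundedI]) auto
qed auto

lemma av_sum_mult_le:
  assumes "0 \<le> c" "0 \<le> B" "\<And>i. i \<in> A \<Longrightarrow> av (g i) * c \<le> B"
  shows "av (sum g A) * c \<le> B"
  using assms(3)
proof (induct A rule: infinite_finite_induct)
  case (insert x F)
  have "av (g x + sum g F) * c \<le> max (av (g x)) (av (sum g F)) * c"
    by (rule mult_right_mono[OF av_add_le_max assms(1)])
  also have "\<dots> = max (av (g x) * c) (av (sum g F) * c)"
    using assms(1) by (simp add: max_mult_distrib_right)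
  also have "\<dots> \<le> B"
    using insert by simp
  finally show ?case
    using insert by simp
qed (use assms in auto)



lemma of_nat_neq_0_if_padic:
  assumes p: "prime p" "av (of_nat p) = 1 / real p" and n: "n > 0"
  shows "(of_nat n :: 'k) \<noteq> 0"
  using n
proof (induct n rule: less_induct)
  case (less n)
  have p2: "p \<ge> 2"
    using p(1) by (simp add: prime_ge_2_nat)
  have p0: "(of_nat p :: 'k) \<noteq> 0"
  proof
    assume "(of_nat p :: 'k) = 0"
    then show False
      using p(2) p2 by simp
  qed
  show ?case
  proof (cases "p dvd n")
    case True
    then obtain m where m: "n = p * m"
      by (auto elim: dvdE)
    then have "(of_nat m :: 'k) \<noteq> 0"
      using less p2 by (intro less(1)) auto
    then show ?thesis
      using m p0 by simp
  next
    case False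
    then have "coprime (int p) (int n)"
      using p(1) by (simp add: prime_imp_coprime)
    then obtain s t :: int where st: "s * int p + t * int n = 1"
      using bezout_int[of "int p" "int n"] by (auto simp: gcd_int_def coprime_iff_gcd_eq_1)
    show ?thesis
    proof
      assume "(of_nat n :: 'k) = 0"
      then have "(of_int s :: 'k) * of_nat p = 1"
        using arg_cong[OF st, of "of_int :: int \<Rightarrow> 'k"] by simp
      then have "av (of_int s :: 'k) * (1 / real p) = 1"
        using p(2) by (metis av_1 av_mult)
      then have "av (of_int s :: 'k) = real p"
        using p2 by (simp add: field_simps)
      then show False
        using av_of_int_le_1[of s] p2 by simp
    qed
  qed
qed

lemma kconv_iff: "kconv av X L \<longleftrightarrow> (\<lambda>n. av (X n - L)) \<longlonglongrightarrow> 0"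
  unfolding kconv_def LIMSEQ_iff by (simp add: eventually_sequentially)

lemma kconv_unique: "kconv av X L \<Longrightarrow> kconv av X M \<Longrightarrow> L = M"
proof (rule ccontr)
  assume conv: "kconv av X L" "kconv av X M" and "L \<noteq> M"
  then have e: "av (L - M) > 0"
    using av_pos by simp
  from conv e obtain N1 N2 where
    "\<forall>n\<ge>N1. av (X n - L) < av (L - M)" "\<forall>n\<ge>N2. av (X n - M) < av (L - M)"
    unfolding kconv_def by meson
  then have "av (X (max N1 N2) - L) < av (L - M)" "av (X (max N1 N2) - M) < av (L - M)"
    by auto
  moreover have "av (L - M) \<le> max (av (L - X (max N1 N2))) (av (X (max N1 N2) - M))"
    using av_add_le_max[of "L - X (max N1 N2)" "X (max N1 N2) - M"] by simp
  ultimately show False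
    using av_minus_commute[of L "X (max N1 N2)"] by linarith
qed

lemma ksum_eqI: "kconv av (\<lambda>n. \<Sum>i<n. x i) S \<Longrightarrow> ksum av x = S"
  unfolding ksum_def by (rule the_equality) (auto intro: kconv_unique)

lemma kconv_const: "kconv av (\<lambda>n. c) c"
  by (simp add: kconv_iff)

lemma kconv_add: "kconv av X L \<Longrightarrow> kconv av Y M \<Longrightarrow> kconv av (\<lambda>n. X n + Y n) (L + M)"
  unfolding kconv_iff
proof -
  assume lim: "(\<lambda>n. av (X n - L)) \<longlonglongrightarrow> 0" "(\<lambda>n. av (Y n - M)) \<longlonglongrightarrow> 0"
  have "av (X n + Y n - (L + M)) \<le> av (X n - L) + av (Y n - M)" for n
  proof -
    have "X n + Y n - (L + M) = (X n - L) + (Y n - M)"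
      by simp
    then have "av (X n + Y n - (L + M)) \<le> max (av (X n - L)) (av (Y n - M))"
      using av_add_le_max by metis
    then show ?thesis
      using av_nonneg[of "X n - L"] av_nonneg[of "Y n - M"] by linarith
  qed
  moreover have "(\<lambda>n. av (X n - L) + av (Y n - M)) \<longlonglongrightarrow> 0"
    using tendsto_add[OF lim] by simp
  ultimately show "(\<lambda>n. av (X n + Y n - (L + M))) \<longlonglongrightarrow> 0"
    by (rule tendsto_0_squeeze) simp
qed

lemma kconv_cmult: "kconv av X L \<Longrightarrow> kconv av (\<lambda>n. c * X n) (c * L)"
  unfolding kconv_iff
  using tendsto_mult_right_zero[of "\<lambda>n. av (X n - L)" sequentially "av c"]
  by (simp add: av_mult right_diff_distrib[symmetric])

lemma kconv_diff: "kconv av X L \<Longrightarrow> kconv av Y M \<Longrightarrow> kconv av (\<lambda>n. X n - Y n) (L - M)"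
  using kconv_add[OF _ kconv_cmult, of X L Y M "-1"] by simp

lemma kconv_eventually_eq:
  "kconv av X L \<Longrightarrow> eventually (\<lambda>n. X n = Y n) sequentially \<Longrightarrow> kconv av Y L"
  unfolding kconv_iff by (erule Lim_transform_eventually) (auto elim: eventually_mono)

lemma kconv_reindex_diff: "kconv av X L \<Longrightarrow> kconv av (\<lambda>n. X (n - k)) L"
  unfolding kconv_iff
proof -
  assume lim: "(\<lambda>n. av (X n - L)) \<longlonglongrightarrow> 0"
  have "filterlim (\<lambda>n. n - k) sequentially sequentially"
    by (simp add: filterlim_iff eventually_sequentially) (metis add_le_imp_le_diff le_add2 order_trans)
  from filterlim_compose[OF lim this] show "(\<lambda>n. av (X (n - k) - L)) \<longlonglongrightarrow> 0"
    by (simp add: o_def)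
qed

lemma kconv_reindex_add: "kconv av X L \<Longrightarrow> kconv av (\<lambda>n. X (n + k)) L"
  unfolding kconv_iff using LIMSEQ_ignore_initial_segment by auto

lemma kconv_av_le:
  assumes "kconv av X L" "eventually (\<lambda>n. av (X n) \<le> B) sequentially"
  shows "av L \<le> B"
proof (rule ccontr)
  assume "\<not> av L \<le> B"
  obtain N2 where N2: "\<forall>n\<ge>N2. av (X n) \<le> B"
    using assms(2) by (auto simp: eventually_sequentially)
  then have "0 < av L"
    using \<open>\<not> av L \<le> B\<close> N2[rule_format, of N2] av_nonneg[of "X N2"] by linarith
  then obtain N1 where N1: "\<forall>n\<ge>N1. av (X n - L) < av L"
    using assms(1) unfolding kconv_def by blast
  define n where "n = max N1 N2"
  have "av (L - X n) < av L"
    using N1 av_minus_commute[of L "X n"] by (simp add: n_def)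
  moreover have "av (X n) < av L"
    using N2[rule_format, of n] \<open>\<not> av L \<le> B\<close> by (simp add: n_def)
  moreover have "av L \<le> max (av (L - X n)) (av (X n))"
    using av_add_le_max[of "L - X n" "X n"] by simp
  ultimately show False
    by simp
qed

lemma kconv_ksum:
  assumes "(\<lambda>n. av (x n)) \<longlonglongrightarrow> 0"
  shows "kconv av (\<lambda>n. \<Sum>i<n. x i) (ksum av x)"
proof -
  have "kcauchy av (\<lambda>n. \<Sum>i<n. x i)"
    unfolding kcauchy_def
  proof (intro allI impI)
    fix e :: real
    assume "e > 0"
    then obtain N where N: "\<forall>n\<ge>N. av (x n) < e/2"
      using assms unfolding LIMSEQ_iff
      by (metis abs_of_nonneg av_nonneg diff_zero half_gt_zero real_norm_def)
    have close: "av ((\<Sum>i<m. x i) - (\<Sum>i<n. x i)) < e" if "N \<le> n" "n \<le> m" for m n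
    proof -
      have "(\<Sum>i<m. x i) - (\<Sum>i<n. x i) = (\<Sum>i\<in>{n..<m}. x i)"
        using that sum_diff_nat_ivl[of 0 n m x] by (simp add: lessThan_atLeast0)
      moreover have "av (\<Sum>i\<in>{n..<m}. x i) \<le> e/2"
        using N \<open>e > 0\<close> that by (intro av_sum_le) (auto intro: less_imp_le)
      ultimately show ?thesis
        using \<open>e > 0\<close> by simp
    qed
    show "\<exists>N. \<forall>m\<ge>N. \<forall>n\<ge>N. av ((\<Sum>i<m. x i) - (\<Sum>i<n. x i)) < e"
    proof (intro exI allI impI)
      fix m n
      assume "N \<le> m" "N \<le> n"
      then show "av ((\<Sum>i<m. x i) - (\<Sum>i<n. x i)) < e"
        using close[of n m] close[of m n] av_minus_commute[of "\<Sum>i<m. x i"]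
        by (cases "n \<le> m") auto
    qed
  qed
  with complete obtain L where "kconv av (\<lambda>n. \<Sum>i<n. x i) L"
    by blast
  then show ?thesis
    using ksum_eqI by simp
qed

lemma av_partial_sum_error_le:
  assumes conv: "kconv av (\<lambda>N. \<Sum>n<N. x n) S" and small: "\<And>n. av (x n) \<le> e" and "0 \<le> e"
  shows "av ((\<Sum>n<N. x n) - S) \<le> e"
proof (rule kconv_av_le[OF kconv_diff[OF kconv_const conv]])
  have "av ((\<Sum>n<N. x n) - (\<Sum>n<K. x n)) \<le> e" if "N \<le> K" for K
  proof -
    have "(\<Sum>n<N. x n) - (\<Sum>n<K. x n) = - (\<Sum>n\<in>{N..<K}. x n)"
      using that sum_diff_nat_ivl[of 0 N K x] by (simp add: lessThan_atLeast0) (metis minus_diff_eq)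
    moreover have "av (\<Sum>n\<in>{N..<K}. x n) \<le> e"
      using small \<open>0 \<le> e\<close> by (intro av_sum_le) auto
    ultimately show ?thesis
      by simp
  qed
  then show "eventually (\<lambda>K. av ((\<Sum>n<N. x n) - (\<Sum>n<K. x n)) \<le> e) sequentially"
    unfolding eventually_sequentially by blast
qed

lemma kconv_eventually_av_le: "kconv av X L \<Longrightarrow> e > 0 \<Longrightarrow> eventually (\<lambda>N. av (X N - L) \<le> e) sequentially"
  unfolding kconv_iff by (drule order_tendstoD(2)) (auto elim: eventually_mono)

text \<open>Fubini for triangular double series: uniform smallness of the rows replaces absolute
  convergence.\<close>

lemma kconv_triangular_double_sum:
  fixes w :: "nat \<Rightarrow> nat \<Rightarrow> 'k"
  assumes triangular: "\<And>m n. n < m \<Longrightarrow> w m n = 0"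
    and rows: "\<And>m. kconv av (\<lambda>N. \<Sum>n<N. w m n) (r m)"
    and small: "\<And>e. e > 0 \<Longrightarrow> \<exists>M. \<forall>m\<ge>M. \<forall>n. av (w m n) \<le> e"
  shows "kconv av (\<lambda>N. \<Sum>n<N. \<Sum>m\<le>n. w m n) (ksum av r)"
proof -
  have tail: "av ((\<Sum>n<N. w m n) - r m) \<le> e" if "\<forall>n. av (w m n) \<le> e" "e > 0" for m N e
    using av_partial_sum_error_le[OF rows] that by simp
  have "(\<lambda>m. av (r m)) \<longlonglongrightarrow> 0"
  proof (rule tendsto_0_if_eventually_le)
    fix e :: real
    assume "e > 0"
    with small obtain M where "\<forall>m\<ge>M. \<forall>n. av (w m n) \<le> e"
      by blast
    then have "\<forall>m\<ge>M. av (r m) \<le> e"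
      using tail[of _ e 0] \<open>e > 0\<close> by simp
    then show "eventually (\<lambda>m. av (r m) \<le> e) sequentially"
      by (auto simp: eventually_sequentially)
  qed simp
  then have row_sums: "kconv av (\<lambda>N. \<Sum>m<N. r m) (ksum av r)"
    by (rule kconv_ksum)
  define D where "D N = (\<Sum>m<N. (\<Sum>n<N. w m n) - r m)" for N
  have diagonal: "(\<Sum>n<N. \<Sum>m\<le>n. w m n) = (\<Sum>m<N. r m) + D N" for N
  proof -
    have "(\<Sum>n<N. \<Sum>m\<le>n. w m n) = (\<Sum>n<N. \<Sum>m<N. w m n)"
      by (intro sum.cong refl sum.mono_neutral_left) (auto simp: triangular)
    also have "\<dots> = (\<Sum>m<N. \<Sum>n<N. w m n)"
      by (rule sum.swap)
    finally show ?thesis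
      by (simp add: D_def sum_subtractf)
  qed
  have "kconv av D 0"
    unfolding kconv_iff
  proof (simp, rule tendsto_0_if_eventually_le)
    fix e :: real
    assume "e > 0"
    with small obtain M where M: "\<forall>m\<ge>M. \<forall>n. av (w m n) \<le> e"
      by blast
    have "eventually (\<lambda>N. \<forall>m\<in>{..<M}. av ((\<Sum>n<N. w m n) - r m) \<le> e) sequentially"
      using kconv_eventually_av_le[OF rows \<open>e > 0\<close>] by (intro eventually_ball_finite) auto
    then show "eventually (\<lambda>N. av (D N) \<le> e) sequentially"
    proof (rule eventually_mono)
      fix N
      assume "\<forall>m\<in>{..<M}. av ((\<Sum>n<N. w m n) - r m) \<le> e"
      then have "av ((\<Sum>n<N. w m n) - r m) \<le> e" for m
        using tail[of m e N] M \<open>e > 0\<close> by (cases "m < M") (simp_all add: not_less)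
      then show "av (D N) \<le> e"
        unfolding D_def using \<open>e > 0\<close> by (intro av_sum_le) simp_all
    qed
  qed simp
  then show ?thesis
    using kconv_add[OF row_sums, of D 0] by (simp add: diagonal)
qed

section \<open>Gauss norms and evaluation of power series\<close>

definition gauss_norm_le :: "'k fps \<Rightarrow> real \<Rightarrow> real \<Rightarrow> bool" where
  "gauss_norm_le a \<rho> B \<longleftrightarrow> (\<forall>n. av (a$n) * \<rho>^n \<le> B)"

definition gauss_bounded :: "'k fps \<Rightarrow> real \<Rightarrow> bool" where
  "gauss_bounded a \<rho> \<longleftrightarrow> (\<exists>B. gauss_norm_le a \<rho> B)"

text \<open>terms_null a \<rho> means that a converges on the closed disc of radius \<rho>.\<close>

definition terms_null :: "'k fps \<Rightarrow> real \<Rightarrow> bool" where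
  "terms_null a \<rho> \<longleftrightarrow> (\<lambda>n. av (a$n) * \<rho>^n) \<longlonglongrightarrow> 0"

lemma gauss_norm_le_nonneg: "gauss_norm_le a \<rho> B \<Longrightarrow> 0 \<le> B"
  unfolding gauss_norm_le_def by (metis av_nonneg mult.right_neutral order_trans power_0)

lemma gauss_norm_le_radius_mono:
  assumes "gauss_norm_le a \<rho> B" "0 \<le> r" "r \<le> \<rho>"
  shows "gauss_norm_le a r B"
  unfolding gauss_norm_le_def
proof
  fix n
  have "av (a$n) * r^n \<le> av (a$n) * \<rho>^n"
    using assms(2,3) by (intro mult_left_mono power_mono) auto
  also have "\<dots> \<le> B"
    using assms(1) unfolding gauss_norm_le_def by blast
  finally show "av (a$n) * r^n \<le> B" .
qed

lemma gauss_bounded_radius_mono: "gauss_bounded a \<rho> \<Longrightarrow> 0 \<le> r \<Longrightarrow> r \<le> \<rho> \<Longrightarrow> gauss_bounded a r"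
  unfolding gauss_bounded_def using gauss_norm_le_radius_mono by blast

lemma terms_null_if_gauss_norm_le:
  assumes "gauss_norm_le a \<rho> B" "0 \<le> r" "r < \<rho>"
  shows "terms_null a r"
  unfolding terms_null_def
proof (rule tendsto_0_squeeze)
  have "0 < \<rho>"
    using assms by simp
  show "av (a$n) * r^n \<le> B * (r/\<rho>)^n" for n
  proof -
    have "av (a$n) * r^n = (av (a$n) * \<rho>^n) * (r/\<rho>)^n"
      using \<open>0 < \<rho>\<close> by (simp add: power_divide)
    also have "\<dots> \<le> B * (r/\<rho>)^n"
      using assms(1,2) \<open>0 < \<rho>\<close> unfolding gauss_norm_le_def by (intro mult_right_mono) auto
    finally show ?thesis .
  qed
  show "(\<lambda>n. B * (r/\<rho>)^n) \<longlonglongrightarrow> 0"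
    using assms by (intro tendsto_mult_right_zero LIMSEQ_power_zero) auto
qed (use assms(2) in simp)

lemma terms_null_if_gauss_bounded: "gauss_bounded a \<rho> \<Longrightarrow> av x < \<rho> \<Longrightarrow> terms_null a (av x)"
  unfolding gauss_bounded_def using terms_null_if_gauss_norm_le[OF _ av_nonneg] by blast

lemma gauss_bounded_if_terms_null: "terms_null a \<rho> \<Longrightarrow> gauss_bounded a \<rho>"
proof -
  assume "terms_null a \<rho>"
  then have "Bseq (\<lambda>n. av (a$n) * \<rho>^n)"
    unfolding terms_null_def by (rule convergent_imp_Bseq[OF convergentI])
  then obtain K where "\<forall>n. norm (av (a$n) * \<rho>^n) \<le> K"
    unfolding Bseq_def by blast
  then have "gauss_norm_le a \<rho> K"
    unfolding gauss_norm_le_def by (auto intro: order_trans[OF abs_ge_self])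
  then show ?thesis
    unfolding gauss_bounded_def by blast
qed

lemma gauss_norm_le_mult:
  assumes "gauss_norm_le a \<rho> A" "gauss_norm_le b \<rho> B" "0 \<le> \<rho>"
  shows "gauss_norm_le (a * b) \<rho> (A * B)"
  unfolding gauss_norm_le_def
proof
  fix n
  have "0 \<le> A" "0 \<le> B"
    using gauss_norm_le_nonneg assms by auto
  show "av ((a * b)$n) * \<rho>^n \<le> A * B"
    unfolding fps_mult_nth
  proof (rule av_sum_mult_le)
    fix i
    assume "i \<in> {0..n}"
    then have "av (a$i * b$(n-i)) * \<rho>^n = (av (a$i) * \<rho>^i) * (av (b$(n-i)) * \<rho>^(n-i))"
      by (simp add: av_mult power_add[symmetric])
    also have "\<dots> \<le> A * B"
      using assms \<open>0 \<le> A\<close> unfolding gauss_norm_le_def by (intro mult_mono) auto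
    finally show "av (a$i * b$(n-i)) * \<rho>^n \<le> A * B" .
  qed (use assms \<open>0 \<le> A\<close> \<open>0 \<le> B\<close> in auto)
qed

lemma gauss_norm_le_one: "gauss_norm_le 1 \<rho> 1"
  unfolding gauss_norm_le_def by (simp add: fps_one_nth)

lemma gauss_norm_le_power: "gauss_norm_le a \<rho> A \<Longrightarrow> 0 \<le> \<rho> \<Longrightarrow> gauss_norm_le (a^m) \<rho> (A^m)"
  by (induct m) (auto simp: gauss_norm_le_one intro: gauss_norm_le_mult)

lemma gauss_norm_le_add:
  assumes "gauss_norm_le a \<rho> A" "gauss_norm_le b \<rho> B" "0 \<le> \<rho>"
  shows "gauss_norm_le (a + b) \<rho> (max A B)"
  unfolding gauss_norm_le_def
proof
  fix n
  have "av ((a + b)$n) * \<rho>^n \<le> max (av (a$n)) (av (b$n)) * \<rho>^n"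
    using assms(3) by (intro mult_right_mono) (simp_all add: av_add_le_max)
  also have "\<dots> = max (av (a$n) * \<rho>^n) (av (b$n) * \<rho>^n)"
    using assms(3) by (simp add: max_mult_distrib_right)
  also have "\<dots> \<le> max A B"
    using assms(1,2) unfolding gauss_norm_le_def by (meson max.mono)
  finally show "av ((a + b)$n) * \<rho>^n \<le> max A B" .
qed

lemma gauss_norm_le_uminus: "gauss_norm_le a \<rho> A \<Longrightarrow> gauss_norm_le (- a) \<rho> A"
  unfolding gauss_norm_le_def by simp

lemma gauss_norm_le_const: "gauss_norm_le (fps_const c) \<rho> (av c)"
  unfolding gauss_norm_le_def by simp

lemma gauss_norm_le_X: "0 \<le> \<rho> \<Longrightarrow> gauss_norm_le fps_X \<rho> \<rho>"
  unfolding gauss_norm_le_def by (simp add: fps_X_nth)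

lemma gauss_bounded_mult: "gauss_bounded a \<rho> \<Longrightarrow> gauss_bounded b \<rho> \<Longrightarrow> 0 \<le> \<rho> \<Longrightarrow> gauss_bounded (a * b) \<rho>"
  unfolding gauss_bounded_def using gauss_norm_le_mult by blast

lemma gauss_bounded_add: "gauss_bounded a \<rho> \<Longrightarrow> gauss_bounded b \<rho> \<Longrightarrow> 0 \<le> \<rho> \<Longrightarrow> gauss_bounded (a + b) \<rho>"
  unfolding gauss_bounded_def using gauss_norm_le_add by blast

lemma gauss_bounded_uminus: "gauss_bounded a \<rho> \<Longrightarrow> gauss_bounded (- a) \<rho>"
  unfolding gauss_bounded_def using gauss_norm_le_uminus by blast

lemma gauss_bounded_diff: "gauss_bounded a \<rho> \<Longrightarrow> gauss_bounded b \<rho> \<Longrightarrow> 0 \<le> \<rho> \<Longrightarrow> gauss_bounded (a - b) \<rho>"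
  using gauss_bounded_add[OF _ gauss_bounded_uminus] by (metis diff_conv_add_uminus)

lemma gauss_bounded_const: "gauss_bounded (fps_const c) \<rho>"
  unfolding gauss_bounded_def using gauss_norm_le_const by blast

lemma gauss_bounded_one: "gauss_bounded 1 \<rho>"
  unfolding gauss_bounded_def using gauss_norm_le_one by blast

lemma gauss_bounded_X: "0 \<le> \<rho> \<Longrightarrow> gauss_bounded fps_X \<rho>"
  unfolding gauss_bounded_def using gauss_norm_le_X by blast

lemma gauss_bounded_power: "gauss_bounded a \<rho> \<Longrightarrow> 0 \<le> \<rho> \<Longrightarrow> gauss_bounded (a ^ m) \<rho>"
  unfolding gauss_bounded_def using gauss_norm_le_power by blast

lemma gauss_bounded_sum:
  "(\<And>i. i \<in> S \<Longrightarrow> gauss_bounded (f i) \<rho>) \<Longrightarrow> 0 \<le> \<rho> \<Longrightarrow> gauss_bounded (sum f S) \<rho>"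
  by (induct S rule: infinite_finite_induct)
     (auto intro: gauss_bounded_add gauss_bounded_const[of 0, simplified])

lemma gauss_bounded_prod:
  "(\<And>i. i \<in> S \<Longrightarrow> gauss_bounded (f i) \<rho>) \<Longrightarrow> 0 \<le> \<rho> \<Longrightarrow> gauss_bounded (prod f S) \<rho>"
  by (induct S rule: infinite_finite_induct) (auto intro: gauss_bounded_mult gauss_bounded_one)

lemma gauss_bounded_common_radius:
  "finite S \<Longrightarrow> (\<And>i. i \<in> S \<Longrightarrow> \<exists>\<rho>>0. gauss_bounded (f i) \<rho>) \<Longrightarrow> \<exists>\<rho>>0. \<forall>i\<in>S. gauss_bounded (f i) \<rho>"
proof (induct S rule: finite_induct)
  case empty
  show ?case
    by (rule exI[of _ 1]) simp
next
  case (insert x F)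
  obtain r1 where "r1 > 0" "\<forall>i\<in>F. gauss_bounded (f i) r1"
    using insert by auto
  moreover obtain r2 where "r2 > 0" "gauss_bounded (f x) r2"
    using insert.prems by blast
  ultimately show ?case
    by (intro exI[of _ "min r1 r2"]) (auto intro: gauss_bounded_radius_mono)
qed

lemma kconv_ev:
  assumes "terms_null a (av x)"
  shows "kconv av (\<lambda>N. \<Sum>n<N. a$n * x^n) (ev av a x)"
proof -
  have "(\<lambda>n. av (a$n * x^n)) = (\<lambda>n. av (a$n) * av x ^ n)"
    by (simp add: av_mult av_power)
  then show ?thesis
    using assms unfolding ev_def terms_null_def by (intro kconv_ksum) simp
qed

lemma ev_const: "ev av (fps_const c) x = c"
  unfolding ev_def
proof (rule ksum_eqI, rule kconv_eventually_eq[OF kconv_const])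
  show "\<forall>\<^sub>F N in sequentially. c = (\<Sum>n<N. fps_const c $ n * x^n)"
    unfolding eventually_sequentially
  proof (intro exI[of _ 1] allI impI)
    fix N :: nat
    assume "1 \<le> N"
    then have "(\<Sum>n<N. fps_const c $ n * x^n) = (\<Sum>n\<in>{0}. fps_const c $ n * x^n)"
      by (intro sum.mono_neutral_right) auto
    then show "c = (\<Sum>n<N. fps_const c $ n * x^n)"
      by simp
  qed
qed

lemma ev_X: "ev av fps_X x = x"
  unfolding ev_def
proof (rule ksum_eqI, rule kconv_eventually_eq[OF kconv_const])
  show "\<forall>\<^sub>F N in sequentially. x = (\<Sum>n<N. fps_X $ n * x^n)"
    unfolding eventually_sequentially
  proof (intro exI[of _ 2] allI impI)
    fix N :: nat
    assume "2 \<le> N"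
    then have "(\<Sum>n<N. fps_X $ n * x^n) = (\<Sum>n\<in>{1}. fps_X $ n * x^n)"
      by (intro sum.mono_neutral_right) (auto simp: fps_X_nth)
    then show "x = (\<Sum>n<N. fps_X $ n * x^n)"
      by (simp add: fps_X_nth)
  qed
qed

lemma ev_add:
  assumes "gauss_bounded a \<rho>" "gauss_bounded b \<rho>" "av x < \<rho>"
  shows "ev av (a + b) x = ev av a x + ev av b x"
  unfolding ev_def[of av "a + b"]
  using kconv_add[OF kconv_ev kconv_ev, OF terms_null_if_gauss_bounded terms_null_if_gauss_bounded, OF assms(1,3) assms(2,3)]
  by (intro ksum_eqI) (simp add: sum.distrib distrib_right)

lemma ev_uminus:
  assumes "gauss_bounded a \<rho>" "av x < \<rho>"
  shows "ev av (- a) x = - ev av a x"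
  unfolding ev_def[of av "- a"]
  using kconv_cmult[OF kconv_ev[OF terms_null_if_gauss_bounded[OF assms]], of "-1"]
  by (intro ksum_eqI) (simp add: sum_negf)

lemma ev_diff:
  assumes "gauss_bounded a \<rho>" "gauss_bounded b \<rho>" "av x < \<rho>"
  shows "ev av (a - b) x = ev av a x - ev av b x"
  using ev_add[OF assms(1) gauss_bounded_uminus[OF assms(2)] assms(3)] ev_uminus[OF assms(2,3)]
  by simp

lemma ev_mult:
  assumes a: "gauss_norm_le a \<rho> A" and b: "gauss_norm_le b \<rho> B" and x: "av x < \<rho>"
  shows "ev av (a * b) x = ev av a x * ev av b x"
proof -
  have ta: "terms_null a (av x)" and tb: "terms_null b (av x)"
    using terms_null_if_gauss_norm_le a b x by auto
  define w where "w k n = (if k \<le> n then a$k * x^k * (b$(n-k) * x^(n-k)) else 0)" for k n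
  have "kconv av (\<lambda>N. \<Sum>n<N. \<Sum>k\<le>n. w k n) (ksum av (\<lambda>k. a$k * x^k * ev av b x))"
  proof (rule kconv_triangular_double_sum)
    fix m
    have "(\<Sum>n<N. w m n) = a$m * x^m * (\<Sum>j<N - m. b$j * x^j)" for N
      unfolding w_def
      by (simp add: sum_lessThan_shift_if[of m "\<lambda>j. a$m * x^m * (b$j * x^j)" N, simplified] sum_distrib_left)
    then show "kconv av (\<lambda>N. \<Sum>n<N. w m n) (a$m * x^m * ev av b x)"
      using kconv_cmult[OF kconv_reindex_diff[OF kconv_ev[OF tb]]] by simp
  next
    fix e :: real
    assume "e > 0"
    then obtain M where M: "\<forall>k\<ge>M. av (a$k) * av x ^ k * B \<le> e"
      using ta tendsto_0_mult_eventually_le unfolding terms_null_def by blast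
    have "av (w m n) \<le> e" if "m \<ge> M" for m n
    proof (cases "m \<le> n")
      case True
      then have "av (w m n) = (av (a$m) * av x ^ m) * (av (b$(n-m)) * av x ^ (n-m))"
        by (simp add: w_def av_mult av_power)
      also have "\<dots> \<le> (av (a$m) * av x ^ m) * B"
        using gauss_norm_le_radius_mono[OF b] x unfolding gauss_norm_le_def
        by (intro mult_left_mono) auto
      finally show ?thesis
        using M[rule_format, OF that] by linarith
    qed (use \<open>e > 0\<close> in \<open>simp add: w_def\<close>)
    then show "\<exists>M. \<forall>m\<ge>M. \<forall>n. av (w m n) \<le> e"
      by blast
  qed (simp add: w_def)
  moreover have "(\<Sum>k\<le>n. w k n) = (a * b)$n * x^n" for n
    unfolding w_def fps_mult_nth atMost_atLeast0[symmetric] sum_distrib_right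
    by (intro sum.cong refl) (auto simp: algebra_simps power_add[symmetric])
  moreover have "ksum av (\<lambda>k. a$k * x^k * ev av b x) = ev av a x * ev av b x"
    using kconv_cmult[OF kconv_ev[OF ta], of "ev av b x"]
    by (intro ksum_eqI) (simp add: sum_distrib_left sum_distrib_right mult.commute)
  ultimately show ?thesis
    unfolding ev_def[of av "a * b"] by (intro ksum_eqI) simp
qed

lemma ev_mult_bounded:
  "gauss_bounded a \<rho> \<Longrightarrow> gauss_bounded b \<rho> \<Longrightarrow> av x < \<rho> \<Longrightarrow> ev av (a * b) x = ev av a x * ev av b x"
  unfolding gauss_bounded_def using ev_mult by blast

lemma ev_power: "gauss_bounded a \<rho> \<Longrightarrow> av x < \<rho> \<Longrightarrow> ev av (a ^ m) x = ev av a x ^ m"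
proof (induct m)
  case 0
  then show ?case
    using ev_const[of 1] by simp
next
  case (Suc m)
  then have "0 \<le> \<rho>"
    using av_nonneg[of x] by linarith
  then show ?case
    using Suc ev_mult_bounded[of a \<rho> "a^m" x] gauss_bounded_power by simp
qed

lemma ev_sum:
  "(\<And>i. i \<in> S \<Longrightarrow> gauss_bounded (f i) \<rho>) \<Longrightarrow> av x < \<rho> \<Longrightarrow> ev av (sum f S) x = (\<Sum>i\<in>S. ev av (f i) x)"
proof (induct S rule: infinite_finite_induct)
  case (insert y F)
  then have "0 \<le> \<rho>"
    using av_nonneg[of x] by linarith
  then show ?case
    using insert ev_add[of "f y" \<rho> "sum f F" x] gauss_bounded_sum[of F f \<rho>] by simp
qed (auto simp: ev_const[of 0, simplified])

lemma gauss_norm_le_compose: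
  assumes g: "gauss_norm_le g \<sigma> B" and h: "gauss_norm_le h t \<sigma>" and t: "0 \<le> t"
  shows "gauss_norm_le (g oo h) t B"
  unfolding gauss_norm_le_def
proof
  fix n
  show "av ((g oo h)$n) * t^n \<le> B"
    unfolding fps_compose_nth
  proof (rule av_sum_mult_le)
    fix i
    have "av (g$i * (h^i)$n) * t^n = av (g$i) * (av ((h^i)$n) * t^n)"
      by (simp add: av_mult)
    also have "\<dots> \<le> av (g$i) * \<sigma>^i"
      using gauss_norm_le_power[OF h t, of i] unfolding gauss_norm_le_def by (intro mult_left_mono) auto
    also have "\<dots> \<le> B"
      using g unfolding gauss_norm_le_def by blast
    finally show "av (g$i * (h^i)$n) * t^n \<le> B" .
  qed (use t gauss_norm_le_nonneg[OF g] in auto)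
qed

lemma ev_compose:
  assumes h0: "h$0 = 0" and h: "gauss_bounded h \<rho>" and x: "av x < \<rho>"
    and g: "terms_null g \<sigma>" and small: "gauss_norm_le h (av x) \<sigma>"
  shows "ev av (g oo h) x = ev av g (ev av h x)"
proof -
  have "0 \<le> \<rho>"
    using x av_nonneg[of x] by linarith
  have powers: "kconv av (\<lambda>N. \<Sum>n<N. (h^m)$n * x^n) (ev av h x ^ m)" for m
    using kconv_ev[OF terms_null_if_gauss_bounded[OF gauss_bounded_power[OF h \<open>0 \<le> \<rho>\<close>] x]]
    by (simp add: ev_power[OF h x])
  define w where "w m n = (if m \<le> n then g$m * ((h^m)$n * x^n) else 0)" for m n
  have "kconv av (\<lambda>N. \<Sum>n<N. \<Sum>m\<le>n. w m n) (ksum av (\<lambda>m. g$m * ev av h x ^ m))"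
  proof (rule kconv_triangular_double_sum)
    fix m
    have "w m n = g$m * ((h^m)$n * x^n)" for n
      using startsby_zero_power_prefix[OF h0, of m] by (auto simp: w_def)
    then show "kconv av (\<lambda>N. \<Sum>n<N. w m n) (g$m * ev av h x ^ m)"
      using kconv_cmult[OF powers[of m], of "g$m"] by (simp add: sum_distrib_left)
  next
    fix e :: real
    assume "e > 0"
    then obtain M where M: "\<forall>k\<ge>M. av (g$k) * \<sigma> ^ k * 1 \<le> e"
      using g tendsto_0_mult_eventually_le unfolding terms_null_def by blast
    have "av (w m n) \<le> e" if "m \<ge> M" for m n
    proof (cases "m \<le> n")
      case True
      then have "av (w m n) = av (g$m) * (av ((h^m)$n) * av x ^ n)"
        by (simp add: w_def av_mult av_power)
      also have "\<dots> \<le> av (g$m) * \<sigma>^m"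
        using gauss_norm_le_power[OF small av_nonneg, of m] unfolding gauss_norm_le_def
        by (intro mult_left_mono) auto
      finally show ?thesis
        using M[rule_format, OF that] by linarith
    qed (use \<open>e > 0\<close> in \<open>simp add: w_def\<close>)
    then show "\<exists>M. \<forall>m\<ge>M. \<forall>n. av (w m n) \<le> e"
      by blast
  qed (simp add: w_def)
  moreover have "(\<Sum>m\<le>n. w m n) = (g oo h)$n * x^n" for n
    unfolding w_def fps_compose_nth atMost_atLeast0[symmetric] sum_distrib_right
    by (intro sum.cong refl) (auto simp: algebra_simps)
  ultimately show ?thesis
    unfolding ev_def[of av "g oo h"] ev_def[of av g] by (intro ksum_eqI) simp
qed

lemma ev_shift: "ev av (fps_const c + fps_X) T = c + T"
proof -
  have "ev av (fps_const c + fps_X) T = ev av (fps_const c) T + ev av fps_X T"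
    by (rule ev_add[OF gauss_bounded_const gauss_bounded_X, of "av T + 1"]) simp_all
  then show ?thesis
    by (simp add: ev_const ev_X)
qed

lemma gauss_bounded_shift: "0 \<le> \<rho> \<Longrightarrow> gauss_bounded (fps_const c + fps_X) \<rho>"
  by (intro gauss_bounded_add gauss_bounded_const gauss_bounded_X)

lemma gauss_bounded_poly_shift:
  "(\<And>m. m < d \<Longrightarrow> gauss_bounded (g m) \<rho>) \<Longrightarrow> 0 \<le> \<rho> \<Longrightarrow>
    gauss_bounded (\<Sum>m<d. g m * (fps_const c + fps_X)^m) \<rho>"
  by (intro gauss_bounded_sum gauss_bounded_mult gauss_bounded_power gauss_bounded_shift) auto

lemma ev_poly_shift:
  assumes g: "\<And>m. m < d \<Longrightarrow> gauss_bounded (g m) \<rho>" and T: "av T < \<rho>"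
  shows "ev av (\<Sum>m<d. g m * (fps_const c + fps_X)^m) T = (\<Sum>m<d. ev av (g m) T * (c + T)^m)"
proof -
  have "0 \<le> \<rho>"
    using T av_nonneg[of T] by linarith
  then have "gauss_bounded ((fps_const c + fps_X)^m) \<rho>" for m
    by (intro gauss_bounded_power gauss_bounded_shift)
  moreover have "ev av ((fps_const c + fps_X)^m) T = (c + T)^m" for m
    using ev_power[OF gauss_bounded_shift[OF \<open>0 \<le> \<rho>\<close>] T] by (simp add: ev_shift)
  ultimately have "ev av (g m * (fps_const c + fps_X)^m) T = ev av (g m) T * (c + T)^m" if "m < d" for m
    using ev_mult_bounded[OF g[OF that] _ T] by simp
  moreover have "ev av (\<Sum>m<d. g m * (fps_const c + fps_X)^m) T
                 = (\<Sum>m<d. ev av (g m * (fps_const c + fps_X)^m) T)"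
    using g \<open>0 \<le> \<rho>\<close> \<open>\<And>m. gauss_bounded ((fps_const c + fps_X)^m) \<rho>\<close>
    by (intro ev_sum[OF _ T] gauss_bounded_mult) auto
  ultimately show ?thesis
    by simp
qed

section \<open>Taylor expansion and zeros of power series\<close>

lemma av_binomial_term_le:
  assumes "0 \<le> R" "av c \<le> R"
  shows "av (of_nat (m choose n) * h$m * c^(m-n)) * R^n \<le> av (h$m) * R^m"
proof (cases "n \<le> m")
  case True
  have "av (of_nat (m choose n) * h$m * c^(m-n)) * R^n
        = av (of_nat (m choose n) :: 'k) * (av (h$m) * (av c ^ (m-n) * R^n))"
    by (simp add: av_mult av_power)
  also have "\<dots> \<le> 1 * (av (h$m) * (R^(m-n) * R^n))"
    using assms by (intro mult_mono av_of_nat_le_1 mult_left_mono power_mono) auto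
  also have "\<dots> = av (h$m) * R^m"
    using True by (simp add: power_add[symmetric])
  finally show ?thesis .
qed (simp add: assms binomial_eq_0)

lemma expand_at_nth: "expand_at av h c $ n = ksum av (\<lambda>m. of_nat (m choose n) * h$m * c^(m-n))"
  by (simp add: expand_at_def)

lemma expand_at_nth_0: "expand_at av h c $ 0 = ev av h c"
  by (simp add: expand_at_nth ev_def)

lemma kconv_expand_at_nth:
  assumes "terms_null h R" "0 < R" "av c \<le> R"
  shows "kconv av (\<lambda>N. \<Sum>m<N. of_nat (m choose n) * h$m * c^(m-n)) (expand_at av h c $ n)"
  unfolding expand_at_nth
proof (rule kconv_ksum, rule tendsto_0_squeeze)
  show "av (of_nat (m choose n) * h$m * c^(m-n)) \<le> av (h$m) * R^m / R^n" for m
    using av_binomial_term_le[OF less_imp_le[OF assms(2)] assms(3), of m n h] assms(2)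
    by (simp add: field_simps)
  show "(\<lambda>m. av (h$m) * R^m / R^n) \<longlonglongrightarrow> 0"
    using assms(1) unfolding terms_null_def by (rule tendsto_divide_zero)
qed simp

lemma gauss_norm_le_expand_at:
  assumes "terms_null h R" "0 < R" "av c \<le> R" "gauss_norm_le h R B"
  shows "gauss_norm_le (expand_at av h c) R B"
  unfolding gauss_norm_le_def
proof
  fix n
  have "av (expand_at av h c $ n) \<le> B / R^n"
  proof (rule kconv_av_le[OF kconv_expand_at_nth[OF assms(1-3)]], intro always_eventually allI av_sum_le)
    show "0 \<le> B / R^n"
      using gauss_norm_le_nonneg[OF assms(4)] assms(2) by simp
    fix m
    have "av (of_nat (m choose n) * h$m * c^(m-n)) * R^n \<le> av (h$m) * R^m"
      by (rule av_binomial_term_le[OF less_imp_le[OF assms(2)] assms(3)])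
    also have "\<dots> \<le> B"
      using assms(4) unfolding gauss_norm_le_def by blast
    finally show "av (of_nat (m choose n) * h$m * c^(m-n)) \<le> B / R^n"
      using assms(2) by (simp add: field_simps)
  qed
  then show "av (expand_at av h c $ n) * R^n \<le> B"
    using assms(2) by (simp add: field_simps)
qed

lemma gauss_bounded_expand_at:
  assumes "terms_null h R" "0 < R" "av c \<le> R"
  shows "gauss_bounded (expand_at av h c) R"
  using gauss_bounded_if_terms_null[OF assms(1)] gauss_norm_le_expand_at[OF assms]
  unfolding gauss_bounded_def by blast

text \<open>The binomial double series is summed along rows by Fubini.\<close>

lemma ev_expand_at:
  assumes h: "terms_null h R" and R: "0 < R" and c: "av c \<le> R" and y: "av y \<le> R"
  shows "ev av h (c + y) = ev av (expand_at av h c) y"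
proof -
  define w where "w n m = of_nat (m choose n) * h$m * c^(m-n) * y^n" for n m
  have "kconv av (\<lambda>N. \<Sum>m<N. \<Sum>n\<le>m. w n m) (ksum av (\<lambda>n. expand_at av h c $ n * y^n))"
  proof (rule kconv_triangular_double_sum)
    fix n
    show "kconv av (\<lambda>N. \<Sum>m<N. w n m) (expand_at av h c $ n * y^n)"
      using kconv_cmult[OF kconv_expand_at_nth[OF h R c, of n], of "y^n"]
      by (simp add: w_def sum_distrib_left sum_distrib_right mult.commute)
  next
    fix e :: real
    assume "e > 0"
    then obtain M where M: "\<forall>k\<ge>M. av (h$k) * R^k * 1 \<le> e"
      using h tendsto_0_mult_eventually_le unfolding terms_null_def by blast
    have "av (w n m) \<le> e" if "n \<ge> M" for n m
    proof (cases "n \<le> m")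
      case True
      have "av (w n m) \<le> av (of_nat (m choose n) * h$m * c^(m-n)) * R^n"
        using y by (simp add: w_def av_mult av_power mult_left_mono power_mono)
      also have "\<dots> \<le> av (h$m) * R^m"
        by (rule av_binomial_term_le[OF less_imp_le[OF R] c])
      finally show ?thesis
        using M[rule_format, of m] that True by simp
    qed (use \<open>e > 0\<close> in \<open>simp add: w_def binomial_eq_0\<close>)
    then show "\<exists>M. \<forall>n\<ge>M. \<forall>m. av (w n m) \<le> e"
      by blast
  qed (simp add: w_def binomial_eq_0)
  moreover have "(\<Sum>n\<le>m. w n m) = h$m * (c + y)^m" for m
    using binomial_ring[of y c m] by (simp add: w_def sum_distrib_left algebra_simps)
  ultimately show ?thesis
    unfolding ev_def[of av h] ev_def[of av "expand_at av h c"] by (intro ksum_eqI) simp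
qed

lemma terms_null_deriv:
  assumes "terms_null h R" "0 < R"
  shows "terms_null (fps_deriv h) R"
  unfolding terms_null_def
proof (rule tendsto_0_squeeze)
  show "av (fps_deriv h $ m) * R^m \<le> av (h $ Suc m) * R^(Suc m) / R" for m
  proof -
    have "av (fps_deriv h $ m) * R^m = av (of_nat (Suc m) :: 'k) * (av (h $ Suc m) * R^m)"
      by (simp add: fps_deriv_nth av_mult del: of_nat_Suc)
    also have "\<dots> \<le> 1 * (av (h $ Suc m) * R^m)"
      by (intro mult_right_mono av_of_nat_le_1) (use assms in auto)
    finally show ?thesis
      using assms(2) by simp
  qed
  show "(\<lambda>m. av (h $ Suc m) * R^(Suc m) / R) \<longlonglongrightarrow> 0"
    using LIMSEQ_Suc[OF assms(1)[unfolded terms_null_def]] by (rule tendsto_divide_zero)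
qed (use assms(2) in simp)

lemma expand_at_deriv:
  assumes h: "terms_null h R" and R: "0 < R" and c: "av c \<le> R"
  shows "expand_at av (fps_deriv h) c = fps_deriv (expand_at av h c)"
proof (rule fps_ext)
  fix n
  let ?t = "\<lambda>m. of_nat (m choose Suc n) * h$m * c^(m - Suc n)"
  have "(\<Sum>m<N + 1. ?t m) = (\<Sum>m<N. ?t (Suc m))" for N
    by (simp only: Suc_eq_plus1[symmetric] sum.lessThan_Suc_shift) simp
  then have "kconv av (\<lambda>N. \<Sum>m<N. ?t (Suc m)) (expand_at av h c $ Suc n)"
    using kconv_reindex_add[OF kconv_expand_at_nth[OF h R c], of "Suc n" 1] by simp
  then have "kconv av (\<lambda>N. \<Sum>m<N. of_nat (Suc n) * ?t (Suc m)) (of_nat (Suc n) * expand_at av h c $ Suc n)"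
    unfolding sum_distrib_left[symmetric] by (rule kconv_cmult)
  moreover have "of_nat (Suc n) * ?t (Suc m) = of_nat (m choose n) * fps_deriv h $ m * c^(m-n)" for m
  proof -
    have "(of_nat (Suc n) :: 'k) * of_nat (Suc m choose Suc n) = of_nat (Suc m) * of_nat (m choose n)"
      by (simp only: of_nat_mult[symmetric] Suc_times_binomial)
    then show ?thesis
      by (simp add: fps_deriv_nth algebra_simps del: of_nat_Suc binomial_Suc_Suc)
  qed
  ultimately have "kconv av (\<lambda>N. \<Sum>m<N. of_nat (m choose n) * fps_deriv h $ m * c^(m-n))
                      (of_nat (Suc n) * expand_at av h c $ Suc n)"
    by (simp only:)
  then show "expand_at av (fps_deriv h) c $ n = fps_deriv (expand_at av h c) $ n"
    unfolding expand_at_nth[of _ _ n] fps_deriv_nth by (simp add: ksum_eqI del: of_nat_Suc)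
qed

lemma gauss_norm_le_shrink_radius:
  assumes A: "gauss_norm_le A R B" and A0: "A$0 = 0" and R: "0 < R" and \<sigma>: "0 < \<sigma>"
  shows "\<exists>\<tau>>0. \<tau> \<le> R \<and> gauss_norm_le A \<tau> \<sigma>"
proof -
  have B: "0 \<le> B"
    using gauss_norm_le_nonneg[OF A] .
  define q where "q = \<sigma> / (B + \<sigma>)"
  have q: "0 < q" "q \<le> 1"
    using B \<sigma> by (auto simp: q_def)
  have "av (A$k) * (R * q)^k \<le> \<sigma>" for k
  proof (cases k)
    case (Suc k')
    have "av (A$k) * (R * q)^k = (av (A$k) * R^k) * q^k"
      by (simp add: power_mult_distrib)
    also have "\<dots> \<le> B * q^1"
    proof (rule mult_mono)
      show "av (A$k) * R^k \<le> B"
        using A unfolding gauss_norm_le_def by blast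
      show "q^k \<le> q^1"
        using q Suc by (intro power_decreasing) auto
    qed (use B q in auto)
    also have "\<dots> \<le> \<sigma>"
      using B \<sigma> by (simp add: q_def field_simps)
    finally show ?thesis .
  qed (use A0 \<sigma> in simp)
  then show ?thesis
    using R q mult_left_mono[OF q(2), of R] unfolding gauss_norm_le_def
    by (intro exI[of _ "R * q"]) auto
qed

lemma av_ev_le:
  assumes "gauss_norm_le A t \<sigma>" "av x \<le> t" "terms_null A (av x)"
  shows "av (ev av A x) \<le> \<sigma>"
proof (rule kconv_av_le[OF kconv_ev[OF assms(3)]], intro always_eventually allI av_sum_le)
  show "0 \<le> \<sigma>"
    using gauss_norm_le_nonneg[OF assms(1)] .
  fix n
  have "av (A$n * x^n) \<le> av (A$n) * t^n"
    using assms(2) by (simp add: av_mult av_power mult_left_mono power_mono)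
  then show "av (A$n * x^n) \<le> \<sigma>"
    using assms(1) unfolding gauss_norm_le_def by (meson order_trans)
qed

definition disc_radius :: "bool \<Rightarrow> 'k \<Rightarrow> real" where
  "disc_radius cl c = (if cl then 1 else (1 + av c) / 2)"

lemma disc_radius:
  assumes "c \<in> udisc av cl"
  shows "0 < disc_radius cl c" "av c \<le> disc_radius cl c" "disc_radius cl c \<le> 1"
  using assms by (auto simp: disc_radius_def udisc_def intro: add_pos_nonneg split: if_splits)

lemma terms_null_disc_radius:
  assumes "h \<in> Odisc av cl" "c \<in> udisc av cl"
  shows "terms_null h (disc_radius cl c)"
  using assms av_nonneg[of c]
  by (cases cl) (auto simp: Odisc_def terms_null_def disc_radius_def udisc_def conv_rad_def)

lemma udisc_add:
  assumes "c \<in> udisc av cl" "av y < 1"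
  shows "c + y \<in> udisc av cl"
  using assms av_add_le_max[of c y] by (auto simp: udisc_def split: if_splits)

lemma av_ev_minus_term_le:
  assumes "terms_null a (av x)" and others: "\<And>n. n \<noteq> n0 \<Longrightarrow> av (a$n * x^n) \<le> K" and "0 \<le> K"
  shows "av (ev av a x - a$n0 * x^n0) \<le> K"
proof (rule kconv_av_le[OF kconv_diff[OF kconv_ev[OF assms(1)] kconv_const]])
  have "av ((\<Sum>n<M. a$n * x^n) - a$n0 * x^n0) \<le> K" if "n0 < M" for M
  proof -
    have "(\<Sum>n<M. a$n * x^n) - a$n0 * x^n0 = (\<Sum>n\<in>{..<M} - {n0}. a$n * x^n)"
      using that by (simp add: sum.remove)
    also have "av \<dots> \<le> K"
      using others \<open>0 \<le> K\<close> by (intro av_sum_le) auto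
    finally show ?thesis .
  qed
  then show "eventually (\<lambda>M. av ((\<Sum>n<M. a$n * x^n) - a$n0 * x^n0) \<le> K) sequentially"
    unfolding eventually_sequentially by (meson Suc_le_eq)
qed

text \<open>Near 0 the lowest-order term of a nonzero series strictly dominates all the others.\<close>

lemma ev_neq_0_near_0:
  assumes a: "gauss_norm_le a \<rho> B" and \<rho>: "0 < \<rho>" and "a \<noteq> 0"
  shows "\<exists>t>0. \<forall>x. 0 < av x \<longrightarrow> av x < t \<longrightarrow> ev av a x \<noteq> 0"
proof -
  define n0 where "n0 = subdegree a"
  have an0: "a$n0 \<noteq> 0"
    using \<open>a \<noteq> 0\<close> by (simp add: n0_def)
  have below: "a$n = 0" if "n < n0" for n
    using that unfolding n0_def by (rule nth_less_subdegree_zero)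
  have B: "0 \<le> B"
    using gauss_norm_le_nonneg[OF a] .
  define t where "t = min \<rho> (av (a$n0) * \<rho>^(Suc n0) / (B + 1))"
  have "0 < t"
    using \<rho> B av_pos[OF an0] by (simp add: t_def)
  moreover have "ev av a x \<noteq> 0" if x: "0 < av x" "av x < t" for x
  proof -
    define K where "K = B * (av x / \<rho>)^(Suc n0)"
    have "av x < \<rho>" "av x < av (a$n0) * \<rho>^(Suc n0) / (B + 1)"
      using x by (simp_all add: t_def)
    then have small: "B * av x < av (a$n0) * \<rho>^(Suc n0)"
      using B x(1) by (simp add: pos_less_divide_eq algebra_simps)
    have "0 \<le> K"
      using B x \<rho> by (simp add: K_def)
    have "av (a$n * x^n) \<le> K" if "n \<noteq> n0" for n
    proof (cases "n < n0")
      case False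
      have "av (a$n * x^n) = (av (a$n) * \<rho>^n) * (av x / \<rho>)^n"
        using \<rho> by (simp add: av_mult av_power power_divide)
      also have "\<dots> \<le> B * (av x / \<rho>)^(Suc n0)"
        using a x \<rho> \<open>av x < \<rho>\<close> False that B unfolding gauss_norm_le_def
        by (intro mult_mono power_decreasing) auto
      finally show ?thesis
        by (simp add: K_def)
    qed (use below \<open>0 \<le> K\<close> in simp)
    then have "av (ev av a x - a$n0 * x^n0) \<le> K"
      using terms_null_if_gauss_norm_le[OF a] \<open>av x < \<rho>\<close> \<open>0 \<le> K\<close> by (intro av_ev_minus_term_le) simp_all
    moreover have "K < av (a$n0 * x^n0)"
    proof -
      have "K = (B * av x) * (av x ^ n0 / \<rho>^(Suc n0))"
        by (simp add: K_def power_divide field_simps)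
      also have "\<dots> < (av (a$n0) * \<rho>^(Suc n0)) * (av x ^ n0 / \<rho>^(Suc n0))"
        using small x(1) \<rho> by (intro mult_strict_right_mono) simp_all
      also have "\<dots> = av (a$n0 * x^n0)"
        using \<rho> by (simp add: av_mult av_power)
      finally show ?thesis .
    qed
    ultimately show ?thesis
      by auto
  qed
  ultimately show ?thesis
    by blast
qed

section \<open>Inverses and compositional inverses\<close>

lemma gauss_norm_le_inverse:
  assumes D0: "D$0 \<noteq> 0" and \<tau>: "0 \<le> \<tau>" and dominant: "\<And>k. av (D$k) * \<tau>^k \<le> av (D$0)"
  shows "gauss_norm_le (inverse D) \<tau> (1 / av (D$0))"
  unfolding gauss_norm_le_def
proof
  define \<sigma> where "\<sigma> = av (D$0)"
  have \<sigma>: "0 < \<sigma>"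
    using av_pos[OF D0] by (simp add: \<sigma>_def)
  fix n
  show "av (inverse D $ n) * \<tau>^n \<le> 1 / av (D$0)"
  proof (induct n rule: less_induct)
    case (less n)
    show ?case
    proof (cases n)
      case 0
      then show ?thesis
        by (simp add: inverse_eq_divide av_divide)
    next
      case (Suc n')
      have "av (D$0 * inverse D $ n) = av (\<Sum>i\<in>{1..n}. D$i * inverse D $ (n-i))"
        using fps_inverse_nth_recursion[OF D0, of n] Suc by (simp only: av_minus zero_less_Suc)
      then have "\<sigma> * (av (inverse D $ n) * \<tau>^n) = av (\<Sum>i\<in>{1..n}. D$i * inverse D $ (n-i)) * \<tau>^n"
        unfolding \<sigma>_def by (simp add: av_mult mult.assoc)
      also have "\<dots> \<le> 1"
      proof (rule av_sum_mult_le)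
        fix i
        assume i: "i \<in> {1..n}"
        then have "av (D$i * inverse D $ (n-i)) * \<tau>^n
                   = (av (D$i) * \<tau>^i) * (av (inverse D $ (n-i)) * \<tau>^(n-i))"
          by (simp add: av_mult power_add[symmetric])
        also have "\<dots> \<le> \<sigma> * (1 / \<sigma>)"
          using dominant less i \<sigma> \<tau> unfolding \<sigma>_def by (intro mult_mono) auto
        finally show "av (D$i * inverse D $ (n-i)) * \<tau>^n \<le> 1"
          using \<sigma> by simp
      qed (use \<tau> in simp_all)
      finally show ?thesis
        using \<sigma> by (simp add: \<sigma>_def field_simps)
    qed
  qed
qed

lemma gauss_bounded_inverse:
  assumes D: "gauss_bounded D \<rho>" and \<rho>: "0 < \<rho>" and D0: "D$0 \<noteq> 0"
  shows "\<exists>\<tau>>0. gauss_bounded (inverse D) \<tau>"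
proof -
  obtain B where "gauss_norm_le D \<rho> B"
    using D gauss_bounded_def by blast
  then have "gauss_norm_le (D - fps_const (D$0)) \<rho> (max B (av (D$0)))"
    unfolding diff_conv_add_uminus
    by (rule gauss_norm_le_add[OF _ gauss_norm_le_uminus[OF gauss_norm_le_const]]) (use \<rho> in simp)
  moreover have "(D - fps_const (D$0))$0 = 0"
    by simp
  ultimately obtain \<tau> where \<tau>: "0 < \<tau>" "gauss_norm_le (D - fps_const (D$0)) \<tau> (av (D$0))"
    using gauss_norm_le_shrink_radius[OF _ _ \<rho> av_pos[OF D0]] by blast
  have "av (D$k) * \<tau>^k \<le> av (D$0)" for k
  proof (cases k)
    case (Suc k')
    then have "(D - fps_const (D$0))$k = D$k"
      by simp
    then show ?thesis
      using \<tau>(2) unfolding gauss_norm_le_def by metis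
  qed simp
  then have "gauss_norm_le (inverse D) \<tau> (1 / av (D$0))"
    using gauss_norm_le_inverse[OF D0] \<tau>(1) by simp
  then show ?thesis
    using \<tau>(1) unfolding gauss_bounded_def by blast
qed

lemma gauss_norm_le_fps_inv:
  assumes A0: "A$0 = 0" and A1: "A$1 \<noteq> 0" and t: "0 \<le> t" "t \<le> 1"
    and linear_dominant: "gauss_norm_le A t (av (A$1) * t)"
  shows "gauss_norm_le (fps_inv A) (av (A$1) * t) 1"
  unfolding gauss_norm_le_def
proof
  fix n
  define a1 where "a1 = av (A$1)"
  have "0 < a1"
    using av_pos[OF A1] by (simp add: a1_def)
  have powers: "av ((A^i)$n) * t^n \<le> (a1 * t)^i" for i n
    using gauss_norm_le_power[OF linear_dominant t(1), of i] unfolding gauss_norm_le_def a1_def by blast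
  show "av (fps_inv A $ n) * (av (A$1) * t)^n \<le> 1"
  proof (induct n rule: less_induct)
    case (less n)
    show ?case
    proof (cases n)
      case (Suc n')
      define S where "S = (\<Sum>i\<in>{0..n'}. fps_inv A $ i * (A^i)$n)"
      have "fps_inv A $ n = (fps_X$n - S) / (A$1)^n"
        by (simp add: fps_inv_def Suc S_def del: fps_X_nth)
      then have "av (fps_inv A $ n) = av (fps_X$n - S) / a1^n"
        by (simp only: av_divide av_power a1_def)
      then have "av (fps_inv A $ n) * (a1 * t)^n = av (fps_X$n - S) * t^n"
        using \<open>0 < a1\<close> by (simp add: power_mult_distrib del: fps_X_nth)
      also have "\<dots> \<le> max (av (fps_X$n)) (av S) * t^n"
        using t by (intro mult_right_mono av_diff_le_max) auto
      also have "\<dots> = max (av (fps_X$n) * t^n) (av S * t^n)"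
        using t by (simp add: max_mult_distrib_right)
      also have "\<dots> \<le> 1"
      proof (rule max.boundedI)
        show "av (fps_X$n) * t^n \<le> 1"
          using t by (auto simp: fps_X_nth intro: power_le_one)
        show "av S * t^n \<le> 1"
          unfolding S_def
        proof (rule av_sum_mult_le)
          fix i
          assume "i \<in> {0..n'}"
          then have "av (fps_inv A $ i) * (a1 * t)^i \<le> 1"
            using less Suc unfolding a1_def by simp
          moreover have "av (fps_inv A $ i) * (av ((A^i)$n) * t^n) \<le> av (fps_inv A $ i) * (a1 * t)^i"
            by (intro mult_left_mono powers) simp
          ultimately show "av (fps_inv A $ i * (A^i)$n) * t^n \<le> 1"
            by (simp add: av_mult mult.assoc)
        qed (use t in simp_all)
      qed
      finally show ?thesis
        by (simp add: a1_def)
    qed (simp add: fps_inv_def)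
  qed
qed

lemma gauss_bounded_fps_inv:
  assumes A0: "A$0 = 0" and A1: "A$1 \<noteq> 0" and A: "gauss_norm_le A \<rho> B" and \<rho>: "0 < \<rho>"
  shows "\<exists>\<rho>'>0. gauss_bounded (fps_inv A) \<rho>'"
proof -
  define a1 where "a1 = av (A$1)"
  have a1: "0 < a1"
    using av_pos[OF A1] by (simp add: a1_def)
  have B: "0 \<le> B"
    using gauss_norm_le_nonneg[OF A] .
  define t where "t = min 1 (min \<rho> (a1 * \<rho>^2 / (B + 1)))"
  have "t \<le> a1 * \<rho>^2 / (B + 1)"
    by (simp add: t_def)
  then have t: "0 < t" "t \<le> 1" "t \<le> \<rho>" "t * (B + 1) \<le> a1 * \<rho>^2"
    using a1 \<rho> B by (auto simp: t_def le_divide_eq)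
  have "av (A$k) * t^k \<le> a1 * t" for k
  proof (cases "k \<le> 1")
    case True
    then show ?thesis
      using A0 a1 t by (cases k) (auto simp: a1_def)
  next
    case False
    have "av (A$k) * t^k = (av (A$k) * \<rho>^k) * (t/\<rho>)^k"
      using \<rho> by (simp add: power_divide)
    also have "\<dots> \<le> B * (t/\<rho>)^2"
      using A t \<rho> B False unfolding gauss_norm_le_def by (intro mult_mono power_decreasing) auto
    also have "\<dots> = (B * t) * t / \<rho>^2"
      by (simp add: power2_eq_square)
    also have "\<dots> \<le> (a1 * \<rho>^2) * t / \<rho>^2"
      using t B \<rho> by (intro divide_right_mono mult_right_mono) (auto simp: algebra_simps)
    finally show ?thesis
      using \<rho> by simp
  qed
  then have "gauss_norm_le (fps_inv A) (a1 * t) 1"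
    using gauss_norm_le_fps_inv[OF A0 A1] t unfolding gauss_norm_le_def a1_def by simp
  then show ?thesis
    using a1 t unfolding gauss_bounded_def by (intro exI[of _ "a1 * t"]) auto
qed

lemma conv_rad_if_gauss_bounded: "gauss_bounded a \<rho> \<Longrightarrow> conv_rad av a \<rho>"
  unfolding gauss_bounded_def conv_rad_def using terms_null_if_gauss_norm_le
  by (auto simp: terms_null_def)

lemma gauss_bounded_coeff_prod_linear:
  "(\<And>m. m \<in> S \<Longrightarrow> gauss_bounded (u m) \<rho>) \<Longrightarrow> 0 \<le> \<rho> \<Longrightarrow>
    gauss_bounded (coeff (\<Prod>m\<in>S. [:- u m, 1:]) l) \<rho>"
proof (induct S arbitrary: l rule: infinite_finite_induct)
  case (insert x F)
  have "[:- u x, 1:] * p = smult (- u x) p + pCons 0 p" for p :: "'k fps poly"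
    by simp
  then show ?case
    using insert
    by (cases l) (auto simp: coeff_pCons intro!: gauss_bounded_diff gauss_bounded_mult gauss_bounded_uminus)
qed (auto simp: coeff_1 gauss_bounded_one gauss_bounded_const[of 0, simplified])

text \<open>Convergence of V: by Lagrange's formula each entry is a polynomial in the u i divided by
  prod (u j - u m), whose constant term prod (u j $ 0 - u m $ 0) is nonzero.\<close>

lemma gauss_bounded_Vandermonde_inverse:
  assumes u: "\<And>i. i < d \<Longrightarrow> gauss_bounded (u i) \<rho>" and \<rho>: "0 < \<rho>"
    and distinct: "inj_on (\<lambda>i. u i $ 0) {..<d}"
    and inv_V: "\<forall>i<d. \<forall>j<d. (\<Sum>l<d. u i ^ l * V l j) = (if i = j then 1 else 0)"
    and l: "l < d" and j: "j < d"
  shows "\<exists>\<tau>>0. gauss_bounded (V l j) \<tau>"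
proof -
  define D where "D = (\<Prod>m\<in>{..<d}-{j}. (u j - u m))"
  define N where "N = (\<Prod>m\<in>{..<d}-{j}. [:- u m, 1:])"
  have "inj_on u {..<d}"
    using distinct by (auto simp: inj_on_def)
  then have DV: "D * V l j = coeff N l"
    unfolding D_def N_def by (rule Vandermonde_inverse_Lagrange[OF _ inv_V j l])
  have "D $ 0 = (\<Prod>m\<in>{..<d}-{j}. (u j $ 0 - u m $ 0))"
    unfolding D_def fps_prod_nth_0 by simp
  moreover have "u j $ 0 - u m $ 0 \<noteq> 0" if "m \<in> {..<d}-{j}" for m
    using distinct that j by (auto dest: inj_onD)
  ultimately have D0: "D $ 0 \<noteq> 0"
    by (simp add: prod_zero_iff)
  have "gauss_bounded D \<rho>"
    unfolding D_def using u j \<rho> by (intro gauss_bounded_prod gauss_bounded_diff) auto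
  then obtain \<tau> where \<tau>: "0 < \<tau>" "gauss_bounded (inverse D) \<tau>"
    using gauss_bounded_inverse[OF _ \<rho> D0] by blast
  have "gauss_bounded (coeff N l) \<rho>"
    unfolding N_def using u \<rho> by (intro gauss_bounded_coeff_prod_linear) auto
  then have "gauss_bounded (inverse D * coeff N l) (min \<rho> \<tau>)"
    using \<tau> \<rho> gauss_bounded_radius_mono[of "inverse D" \<tau> "min \<rho> \<tau>"]
      gauss_bounded_radius_mono[of "coeff N l" \<rho> "min \<rho> \<tau>"]
    by (intro gauss_bounded_mult) auto
  moreover have "inverse D * coeff N l = V l j"
    unfolding DV[symmetric] mult.assoc[symmetric] inverse_mult_eq_1[OF D0] by simp
  ultimately show ?thesis
    using \<tau> \<rho> by (intro exI[of _ "min \<rho> \<tau>"]) auto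
qed

lemma conv_rad_Vandermonde_inverse:
  assumes u: "\<And>i. i < d \<Longrightarrow> \<exists>\<rho>>0. gauss_bounded (u i) \<rho>"
    and distinct: "inj_on (\<lambda>i. u i $ 0) {..<d}"
    and inv_V: "\<forall>i<d. \<forall>j<d. (\<Sum>l<d. u i ^ l * V l j) = (if i = j then 1 else 0)"
  shows "\<exists>\<rho>>0. \<forall>l<d. \<forall>j<d. conv_rad av (V l j) \<rho>"
proof -
  obtain \<rho> where \<rho>: "\<rho> > 0" "\<forall>i\<in>{..<d}. gauss_bounded (u i) \<rho>"
    using gauss_bounded_common_radius[of "{..<d}" u] u by auto
  have "\<exists>\<tau>>0. gauss_bounded ((\<lambda>(l, j). V l j) lj) \<tau>" if "lj \<in> {..<d} \<times> {..<d}" for lj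
    using gauss_bounded_Vandermonde_inverse[OF _ \<rho>(1) distinct inv_V, of "fst lj" "snd lj"] \<rho>(2) that
    by (auto simp: case_prod_beta)
  then obtain \<tau> where "\<tau> > 0" "\<forall>lj\<in>{..<d} \<times> {..<d}. gauss_bounded ((\<lambda>(l, j). V l j) lj) \<tau>"
    using gauss_bounded_common_radius[of "{..<d} \<times> {..<d}"] by (metis finite_SigmaI finite_lessThan)
  then show ?thesis
    by (intro exI[of _ \<tau>]) (auto intro: conv_rad_if_gauss_bounded)
qed

end

locale nontrivial_nonarch_complete = nonarch_complete +
  assumes nontrivial: "\<exists>\<pi>. 0 < av \<pi> \<and> av \<pi> < 1"
begin

theorem fps_eq_0_if_ev_eq_0:
  assumes a: "gauss_bounded a \<rho>" and \<rho>: "0 < \<rho>" and \<epsilon>: "0 < \<epsilon>"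
    and zero: "\<And>x. av x < \<epsilon> \<Longrightarrow> ev av a x = 0"
  shows "a = 0"
proof (rule ccontr)
  assume "a \<noteq> 0"
  then obtain t where t: "t > 0" "\<And>x. 0 < av x \<Longrightarrow> av x < t \<Longrightarrow> ev av a x \<noteq> 0"
    using ev_neq_0_near_0[OF _ \<rho>] a unfolding gauss_bounded_def by blast
  obtain \<pi> where \<pi>: "0 < av \<pi>" "av \<pi> < 1"
    using nontrivial by blast
  obtain N where "av \<pi> ^ N < min t \<epsilon>"
    using real_arch_pow_inv[of "min t \<epsilon>" "av \<pi>"] t(1) \<epsilon> \<pi>(2) by auto
  then show False
    using t(2)[of "\<pi>^N"] zero[of "\<pi>^N"] \<pi>(1) by (simp add: av_power)
qed

end

section \<open>Inverse branches of a finite etale map\<close>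

text \<open>For a point c of the t-disc, germ_at av f c is the expansion of t \<mapsto> f(c + t) - f(c),
  and inverse_branch av f c is the local inverse of f near c, as a series in s - f(c).\<close>

definition germ_at :: "('k::field \<Rightarrow> real) \<Rightarrow> 'k fps \<Rightarrow> 'k \<Rightarrow> 'k fps" where
  "germ_at av f c = expand_at av f c - fps_const (ev av f c)"

definition inverse_branch :: "('k::field \<Rightarrow> real) \<Rightarrow> 'k fps \<Rightarrow> 'k \<Rightarrow> 'k fps" where
  "inverse_branch av f c = fps_const c + fps_inv (germ_at av f c)"

lemma inverse_branch_nth_0: "inverse_branch av f c $ 0 = c"
  by (simp add: inverse_branch_def fps_inv_def)

locale etale_branch = nontrivial_nonarch_complete av for av :: "'k::field \<Rightarrow> real" +
  fixes cl :: bool and f :: "'k fps" and c :: 'k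
  assumes f_disc: "f \<in> Odisc av cl"
    and f_maps_disc: "\<And>x. x \<in> udisc av cl \<Longrightarrow> ev av f x \<in> udisc av cl"
    and deriv_f_nonzero: "ev av (fps_deriv f) c \<noteq> 0"
    and c_disc: "c \<in> udisc av cl"
begin

text \<open>The expansion of t \<mapsto> h(f(c + t)).\<close>

definition pullback :: "'k fps \<Rightarrow> 'k fps" where
  "pullback h = expand_at av h (ev av f c) oo germ_at av f c"

lemma f_terms_null: "terms_null f (disc_radius cl c)"
  by (rule terms_null_disc_radius[OF f_disc c_disc])

lemma gauss_norm_le_germ: "\<exists>B. gauss_norm_le (germ_at av f c) (disc_radius cl c) B"
proof -
  obtain B where "gauss_norm_le (expand_at av f c) (disc_radius cl c) B"
    using gauss_bounded_expand_at[OF f_terms_null disc_radius(1,2)[OF c_disc]]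
    unfolding gauss_bounded_def by blast
  then show ?thesis
    unfolding germ_at_def diff_conv_add_uminus
    using gauss_norm_le_add[OF _ gauss_norm_le_uminus[OF gauss_norm_le_const]] disc_radius(1)[OF c_disc]
    by (meson less_imp_le)
qed

lemma germ_nth_0: "germ_at av f c $ 0 = 0"
  by (simp add: germ_at_def expand_at_nth_0)

lemma fps_deriv_germ: "fps_deriv (germ_at av f c) = expand_at av (fps_deriv f) c"
  unfolding germ_at_def using expand_at_deriv[OF f_terms_null disc_radius(1,2)[OF c_disc]] by simp

lemma germ_nth_1: "germ_at av f c $ 1 \<noteq> 0"
proof -
  have "germ_at av f c $ 1 = fps_deriv (germ_at av f c) $ 0"
    by (simp add: germ_at_def)
  then show ?thesis
    using deriv_f_nonzero by (simp add: fps_deriv_germ expand_at_nth_0)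
qed

lemma gauss_bounded_inverse_branch: "\<exists>\<rho>>0. gauss_bounded (inverse_branch av f c) \<rho>"
proof -
  obtain \<rho> where "\<rho> > 0" "gauss_bounded (fps_inv (germ_at av f c)) \<rho>"
    using gauss_norm_le_germ gauss_bounded_fps_inv[OF germ_nth_0 germ_nth_1 _ disc_radius(1)[OF c_disc]]
    by blast
  then show ?thesis
    unfolding inverse_branch_def by (intro exI[of _ \<rho>]) (auto intro: gauss_bounded_add gauss_bounded_const)
qed

text \<open>A radius on which germ_at av f c stays in a disc around f(c) where the Taylor
  expansions at f(c) converge.\<close>

definition pullback_radius :: real where
  "pullback_radius = (SOME \<tau>. 0 < \<tau> \<and> \<tau> \<le> disc_radius cl c \<and>
     gauss_norm_le (germ_at av f c) \<tau> (disc_radius cl (ev av f c) / 2))"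

lemma pullback_radius:
  "0 < pullback_radius" "pullback_radius \<le> disc_radius cl c"
  "gauss_norm_le (germ_at av f c) pullback_radius (disc_radius cl (ev av f c) / 2)"
proof -
  have "0 < disc_radius cl (ev av f c) / 2"
    using disc_radius(1)[OF f_maps_disc[OF c_disc]] by simp
  then have "\<exists>\<tau>>0. \<tau> \<le> disc_radius cl c \<and> gauss_norm_le (germ_at av f c) \<tau> (disc_radius cl (ev av f c) / 2)"
    using gauss_norm_le_germ gauss_norm_le_shrink_radius[OF _ germ_nth_0 disc_radius(1)[OF c_disc]] by blast
  then show "0 < pullback_radius" "pullback_radius \<le> disc_radius cl c"
    "gauss_norm_le (germ_at av f c) pullback_radius (disc_radius cl (ev av f c) / 2)"
    unfolding pullback_radius_def by (metis (mono_tags, lifting) someI_ex)+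
qed

lemma disc_near_c: "av T < pullback_radius \<Longrightarrow> c + T \<in> udisc av cl"
  using pullback_radius(2) disc_radius(3)[OF c_disc] by (intro udisc_add[OF c_disc]) simp

lemma ev_germ:
  assumes "av T < pullback_radius"
  shows "ev av (germ_at av f c) T = ev av f (c + T) - ev av f c"
proof -
  have "av T < disc_radius cl c"
    using assms pullback_radius(2) by simp
  then have "ev av (germ_at av f c) T = ev av (expand_at av f c) T - ev av (fps_const (ev av f c)) T"
    unfolding germ_at_def
    by (rule ev_diff[OF gauss_bounded_expand_at[OF f_terms_null disc_radius(1,2)[OF c_disc]] gauss_bounded_const])
  also have "ev av (expand_at av f c) T = ev av f (c + T)"
    using \<open>av T < disc_radius cl c\<close>
    by (intro ev_expand_at[OF f_terms_null disc_radius(1,2)[OF c_disc], symmetric]) simp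
  finally show ?thesis
    by (simp add: ev_const)
qed

lemma
  assumes h: "h \<in> Odisc av cl"
  shows gauss_bounded_pullback: "gauss_bounded (pullback h) pullback_radius"
    and ev_pullback: "av T < pullback_radius \<Longrightarrow> ev av (pullback h) T = ev av h (ev av f (c + T))"
proof -
  define b where "b = ev av f c"
  define \<sigma> where "\<sigma> = disc_radius cl b / 2"
  have b: "b \<in> udisc av cl"
    unfolding b_def by (rule f_maps_disc[OF c_disc])
  have h_null: "terms_null h (disc_radius cl b)"
    by (rule terms_null_disc_radius[OF h b])
  have \<sigma>: "0 < \<sigma>" "\<sigma> < disc_radius cl b"
    using disc_radius(1)[OF b] by (simp_all add: \<sigma>_def)
  obtain B where H_full: "gauss_norm_le (expand_at av h b) (disc_radius cl b) B"
    using gauss_bounded_expand_at[OF h_null disc_radius(1,2)[OF b]] unfolding gauss_bounded_def by blast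
  then have H: "gauss_norm_le (expand_at av h b) \<sigma> B"
    by (rule gauss_norm_le_radius_mono) (use \<sigma> in simp_all)
  have germ: "gauss_norm_le (germ_at av f c) pullback_radius \<sigma>"
    using pullback_radius(3) by (simp add: \<sigma>_def b_def)
  show "gauss_bounded (pullback h) pullback_radius"
    using gauss_norm_le_compose[OF H germ] pullback_radius(1)
    unfolding pullback_def gauss_bounded_def b_def by auto
  assume T: "av T < pullback_radius"
  have germ_small: "gauss_norm_le (germ_at av f c) (av T) \<sigma>"
    using T by (intro gauss_norm_le_radius_mono[OF germ]) auto
  have "av (ev av (germ_at av f c) T) \<le> \<sigma>"
    using av_ev_le[OF germ_small] terms_null_if_gauss_norm_le[OF germ _ T] by simp
  then have "av (ev av (germ_at av f c) T) \<le> disc_radius cl b"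
    using disc_radius(1)[OF b] by (simp add: \<sigma>_def)
  have "ev av (pullback h) T = ev av (expand_at av h b) (ev av (germ_at av f c) T)"
    unfolding pullback_def b_def
  proof (rule ev_compose[OF germ_nth_0 _ T _ germ_small])
    show "gauss_bounded (germ_at av f c) pullback_radius"
      using pullback_radius(3) unfolding gauss_bounded_def by blast
    show "terms_null (expand_at av h (ev av f c)) \<sigma>"
      using terms_null_if_gauss_norm_le[OF H_full] \<sigma> unfolding b_def by simp
  qed
  also have "\<dots> = ev av h (b + ev av (germ_at av f c) T)"
    by (rule ev_expand_at[OF h_null disc_radius(1,2)[OF b] \<open>av (ev av (germ_at av f c) T) \<le> disc_radius cl b\<close>, symmetric])
  also have "b + ev av (germ_at av f c) T = ev av f (c + T)"
    using ev_germ[OF T] by (simp add: b_def)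
  finally show "ev av (pullback h) T = ev av h (ev av f (c + T))" .
qed

lemma pullback_min_poly:
  assumes P: "is_min_poly av cl f d P"
  shows "(\<Sum>m<d. pullback (P m) * (fps_const c + fps_X)^m) + (fps_const c + fps_X)^d = 0"
proof (rule fps_eq_0_if_ev_eq_0[OF _ pullback_radius(1) pullback_radius(1)])
  have P_disc: "P m \<in> Odisc av cl" if "m < d" for m
    using P that by (simp add: is_min_poly_def)
  have "0 \<le> pullback_radius"
    using pullback_radius(1) by simp
  then show "gauss_bounded ((\<Sum>m<d. pullback (P m) * (fps_const c + fps_X)^m) + (fps_const c + fps_X)^d)
      pullback_radius"
    by (intro gauss_bounded_add gauss_bounded_poly_shift gauss_bounded_power gauss_bounded_shift
        gauss_bounded_pullback P_disc)
  fix T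
  assume T: "av T < pullback_radius"
  have bounded: "gauss_bounded (pullback (P m)) pullback_radius" if "m < d" for m
    using gauss_bounded_pullback[OF P_disc[OF that]] .
  have "ev av ((\<Sum>m<d. pullback (P m) * (fps_const c + fps_X)^m) + (fps_const c + fps_X)^d) T
        = ev av (\<Sum>m<d. pullback (P m) * (fps_const c + fps_X)^m) T + ev av ((fps_const c + fps_X)^d) T"
    using \<open>0 \<le> pullback_radius\<close>
    by (intro ev_add[OF _ _ T] gauss_bounded_poly_shift gauss_bounded_power gauss_bounded_shift bounded)
  also have "\<dots> = (\<Sum>m<d. ev av (P m) (ev av f (c + T)) * (c + T)^m) + (c + T)^d"
    using T \<open>0 \<le> pullback_radius\<close>
    by (simp add: ev_poly_shift[OF bounded T] ev_power[OF gauss_bounded_shift] ev_shift ev_pullback P_disc)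
  also have "\<dots> = 0"
    using P disc_near_c[OF T] by (simp add: is_min_poly_def)
  finally show "ev av ((\<Sum>m<d. pullback (P m) * (fps_const c + fps_X)^m) + (fps_const c + fps_X)^d) T = 0" .
qed

lemma terms_null_deriv_f: "terms_null (fps_deriv f) (disc_radius cl c)"
  by (rule terms_null_deriv[OF f_terms_null disc_radius(1)[OF c_disc]])

lemma gauss_bounded_deriv_germ: "gauss_bounded (fps_deriv (germ_at av f c)) pullback_radius"
  unfolding fps_deriv_germ
  by (rule gauss_bounded_radius_mono[OF gauss_bounded_expand_at[OF terms_null_deriv_f disc_radius(1,2)[OF c_disc]]])
     (use pullback_radius(1,2) in simp_all)

lemma ev_deriv_germ:
  "av T < pullback_radius \<Longrightarrow> ev av (fps_deriv (germ_at av f c)) T = ev av (fps_deriv f) (c + T)"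
  unfolding fps_deriv_germ using pullback_radius(2)
  by (intro ev_expand_at[OF terms_null_deriv_f disc_radius(1,2)[OF c_disc], symmetric]) simp

lemma pullback_conn_matrix:
  assumes C: "is_conn_matrix av cl f d C" and j: "j < d"
  shows "fps_deriv (germ_at av f c) * (\<Sum>m<d. pullback (C j m) * (fps_const c + fps_X)^m)
         = of_nat j * (fps_const c + fps_X)^(j - 1)"
proof -
  define S where "S = (\<Sum>m<d. pullback (C j m) * (fps_const c + fps_X)^m)"
  define L where "L = fps_deriv (germ_at av f c) * S - fps_const (of_nat j) * (fps_const c + fps_X)^(j - 1)"
  have C_disc: "C j m \<in> Odisc av cl" if "m < d" for m
    using C j that by (simp add: is_conn_matrix_def)
  have bounded: "gauss_bounded (pullback (C j m)) pullback_radius" if "m < d" for m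
    using gauss_bounded_pullback[OF C_disc[OF that]] .
  have "0 \<le> pullback_radius"
    using pullback_radius(1) by simp
  then have S: "gauss_bounded S pullback_radius"
    unfolding S_def by (intro gauss_bounded_poly_shift bounded)
  have shift_power: "gauss_bounded (fps_const (of_nat j) * (fps_const c + fps_X)^(j - 1)) pullback_radius"
    using \<open>0 \<le> pullback_radius\<close>
    by (intro gauss_bounded_mult gauss_bounded_const gauss_bounded_power gauss_bounded_shift)
  have "L = 0"
  proof (rule fps_eq_0_if_ev_eq_0[OF _ pullback_radius(1) pullback_radius(1)])
    show "gauss_bounded L pullback_radius"
      unfolding L_def using \<open>0 \<le> pullback_radius\<close>
      by (intro gauss_bounded_diff gauss_bounded_mult gauss_bounded_deriv_germ S shift_power)
    fix T
    assume T: "av T < pullback_radius"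
    have "ev av L T = ev av (fps_deriv (germ_at av f c) * S) T
                      - ev av (fps_const (of_nat j) * (fps_const c + fps_X)^(j - 1)) T"
      unfolding L_def using \<open>0 \<le> pullback_radius\<close>
      by (intro ev_diff[OF _ shift_power T] gauss_bounded_mult gauss_bounded_deriv_germ S)
    also have "\<dots> = ev av (fps_deriv (germ_at av f c)) T * ev av S T - of_nat j * (c + T)^(j - 1)"
      using \<open>0 \<le> pullback_radius\<close>
      using ev_mult_bounded[OF gauss_bounded_const gauss_bounded_power[OF gauss_bounded_shift] T]
        ev_power[OF gauss_bounded_shift T]
      by (simp add: ev_mult_bounded[OF gauss_bounded_deriv_germ S T] ev_const ev_shift)
    also have "\<dots> = ev av (fps_deriv f) (c + T) * (\<Sum>m<d. ev av (C j m) (ev av f (c + T)) * (c + T)^m)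
                    - of_nat j * (c + T)^(j - 1)"
      using T unfolding S_def by (simp add: ev_deriv_germ ev_poly_shift[OF bounded T] ev_pullback C_disc)
    also have "\<dots> = 0"
      using C j disc_near_c[OF T] by (simp add: is_conn_matrix_def)
    finally show "ev av L T = 0" .
  qed
  then show ?thesis
    by (simp add: L_def S_def fps_of_nat)
qed

lemma inverse_branch_min_poly:
  assumes "is_min_poly av cl f d P"
  shows "(\<Sum>m<d. expand_at av (P m) (ev av f c) * inverse_branch av f c ^ m) + inverse_branch av f c ^ d = 0"
  using compose_fps_inv_poly_eq_0[OF germ_nth_0 germ_nth_1 pullback_min_poly[OF assms, unfolded pullback_def]]
  by (simp add: inverse_branch_def)

lemma inverse_branch_conn_matrix:
  assumes "is_conn_matrix av cl f d C" and "j < d"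
  shows "(\<Sum>m<d. expand_at av (C j m) (ev av f c) * inverse_branch av f c ^ m)
         = of_nat j * inverse_branch av f c ^ (j - 1) * fps_deriv (inverse_branch av f c)"
  using compose_fps_inv_deriv_eq[OF germ_nth_0 germ_nth_1 pullback_conn_matrix[OF assms, unfolded pullback_def]]
  by (simp add: inverse_branch_def)

end

context nontrivial_nonarch_complete
begin

lemma etale_branch_at:
  assumes phi: "finite_etale av cl f d" and c: "c \<in> udisc av cl"
  shows "etale_branch av cl f c"
proof unfold_locales
  obtain g where "\<forall>x\<in>udisc av cl. ev av (fps_deriv f) x * ev av g x = 1"
    using phi by (auto simp: finite_etale_def)
  then show "ev av (fps_deriv f) c \<noteq> 0"
    using c by (metis mult_zero_left zero_neq_one)
qed (use phi c in \<open>auto simp: finite_etale_def\<close>)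

text \<open>The d inverse branches at the points of the fibre are distinct roots of P(s, X) in k[[s - b]],
  so they are all its roots and u lists them.\<close>

lemma fibre_root_eq_inverse_branch:
  assumes phi: "finite_etale av cl f d"
    and fibre: "bij_betw a {..<d} {x \<in> udisc av cl. ev av f x = b}"
    and P: "is_min_poly av cl f d P"
    and u_root: "\<forall>i<d. u i $ 0 = a i \<and> (\<Sum>m<d. expand_at av (P m) b * u i ^ m) + u i ^ d = 0"
    and i: "i < d"
  shows "u i = inverse_branch av f (a i)"
proof -
  define r where "r k = inverse_branch av f (a k)" for k
  have a: "a k \<in> udisc av cl" "ev av f (a k) = b" if "k < d" for k
    using bij_betw_apply[OF fibre] that by auto
  have a_inj: "inj_on a {..<d}"
    using fibre by (rule bij_betw_imp_inj_on)
  have r0: "r k $ 0 = a k" for k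
    unfolding r_def by (rule inverse_branch_nth_0)
  have "inj_on r {..<d}"
    using a_inj r0 by (metis inj_on_def)
  moreover have "poly (monic_poly d (\<lambda>m. expand_at av (P m) b)) (r k) = 0" if "k < d" for k
    using etale_branch.inverse_branch_min_poly[OF etale_branch_at[OF phi a(1)[OF that]] P] a(2)[OF that]
    by (simp add: poly_monic_poly r_def)
  moreover have "poly (monic_poly d (\<lambda>m. expand_at av (P m) b)) (u i) = 0"
    using u_root i by (simp add: poly_monic_poly)
  ultimately obtain k where "k < d" "u i = r k"
    using poly_root_among_distinct_roots[OF monic_poly_neq_0 degree_monic_poly] by blast
  moreover have "a i = a k"
    using \<open>u i = r k\<close> u_root i r0 by metis
  ultimately show ?thesis
    using a_inj i by (auto simp: r_def dest: inj_onD)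
qed

end

theorem corollary3p14:
  fixes av :: "'k::field \<Rightarrow> real" and cl :: bool and f :: "'k fps" and d :: nat
    and b :: 'k and a :: "nat \<Rightarrow> 'k" and P :: "nat \<Rightarrow> 'k fps"
    and C :: "nat \<Rightarrow> nat \<Rightarrow> 'k fps" and u :: "nat \<Rightarrow> 'k fps"
    and V :: "nat \<Rightarrow> nat \<Rightarrow> 'k fps"
  assumes k: "nonarch_field av"
    and phi: "finite_etale av cl f d"
    and b: "b \<in> udisc av cl"
    and fibre: "bij_betw a {..<d} {x \<in> udisc av cl. ev av f x = b}"
    and P: "is_min_poly av cl f d P"
    and u_root: "\<forall>i<d. fps_nth (u i) 0 = a i \<and>
                   (\<Sum>m<d. expand_at av (P m) b * u i ^ m) + u i ^ d = 0"
    and V_inv: "\<forall>i<d. \<forall>j<d. (\<Sum>l<d. V i l * u l ^ j) = (if i = j then 1 else 0)"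
    and inv_V: "\<forall>i<d. \<forall>j<d. (\<Sum>l<d. u i ^ l * V l j) = (if i = j then 1 else 0)"
    and C: "is_conn_matrix av cl f d C"
  shows "(\<forall>j<d. horizontal av d b C (\<lambda>i. V i j))
       \<and> (\<forall>c::nat \<Rightarrow> 'k. (\<forall>i<d. (\<Sum>j<d. fps_const (c j) * V i j) = 0) \<longrightarrow> (\<forall>j<d. c j = 0))
       \<and> (\<forall>y. horizontal av d b C y \<longrightarrow>
              (\<exists>c::nat \<Rightarrow> 'k. \<forall>i<d. y i = (\<Sum>j<d. fps_const (c j) * V i j)))"
proof -
  obtain p :: nat where p: "prime p" "av (of_nat p) = 1 / real p"
    using k by (auto simp: nonarch_field_def)
  then interpret nontrivial_nonarch_complete av
    using k prime_ge_2_nat[OF p(1)] by unfold_locales (auto simp: nonarch_field_def intro!: exI[of _ "of_nat p"])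
  have fibre_point: "a i \<in> udisc av cl" "ev av f (a i) = b" if "i < d" for i
    using bij_betw_apply[OF fibre] that by auto
  have branch: "u i = inverse_branch av f (a i)" "etale_branch av cl f (a i)" if "i < d" for i
    using fibre_root_eq_inverse_branch[OF phi fibre P u_root that] etale_branch_at[OF phi fibre_point(1)[OF that]] .
  have conn: "(\<Sum>m<d. expand_at av (C j m) b * u l ^ m) = of_nat j * u l ^ (j - 1) * fps_deriv (u l)"
    if "l < d" "j < d" for l j
    using etale_branch.inverse_branch_conn_matrix[OF branch(2) C, of l j] branch(1) fibre_point(2) that by simp
  have "inj_on (\<lambda>i. u i $ 0) {..<d}"
    using u_root bij_betw_imp_inj_on[OF fibre] by (simp add: inj_on_def)
  then obtain \<rho> where "\<rho> > 0" "\<forall>l<d. \<forall>j<d. conv_rad av (V l j) \<rho>"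
    using conv_rad_Vandermonde_inverse[OF _ _ inv_V] etale_branch.gauss_bounded_inverse_branch branch by metis
  moreover note horizontal_basis_formal[OF of_nat_neq_0_if_padic[OF p] conn V_inv inv_V]
  moreover have "c j = 0" if "\<forall>i<d. (\<Sum>j<d. fps_const (c j) * V i j) = 0" "j < d" for c j
    using Vandermonde_inverse_columns_independent[OF inv_V, of "\<lambda>j. fps_const (c j)"] that by simp
  ultimately show ?thesis
    unfolding horizontal_def by blast
qed

end
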